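(* Let $d\ge 1$ and let $(h_0,\dots,h_s)$ be a sequence of non-negative integers. The following are equivalent: (a) there is a $d$-uniform Ferrers hypergraph $F$ such that $\alpha_i(F)=h_i$ for $0\le i\le s$ and $\alpha_i(F)=0$ for $i>s$; (b) $(h_0,\dots,h_s)$ is an $O$-sequence with $h_1\le d$.
   Context: A $d$-uniform Ferrers hypergraph on $X^{(1)}\sqcup\dots\sqcup X^{(d)}$ (each $X^{(j)}=\{1,\dots,n_j\}$ linearly ordered) is a set $F\subseteq X^{(1)}\times\dots\times X^{(d)}$ such that $(i_1,\dots,i_d)\in F$ and $i'_j\le i_j$ for all $j$ imply $(i'_1,\dots,i'_d)\in F$. For $k\ge 0$, $\alpha_k(F):=\#\{(i_1,\dots,i_d)\in F:\sum_j i_j=k+d\}$. Macaulay representation: for positive integers $b,j$ there are unique integers $m_j>m_{j-1}>\dots>m_r\ge r\ge 1$ with $b=\binom{m_j}{j}+\binom{m_{j-1}}{j-1}+\dots+\binom{m_r}{r}$; set $b^{\langle j\rangle}=\binom{m_j+1}{j+1}+\dots+\binom{m_r+1}{r+1}$, and $0^{\langle j\rangle}=0$. A sequence $(h_0,h_1,\dots)$ of non-negative integers is an $O$-sequence if $h_0=1$ and $h_{i+1}\le h_i^{\langle i\rangle}$ for all $i\ge 1$. *)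

theory Defs
  imports Main
begin

text \<open>Points of X^(1) x ... x X^(d) are lists x of length d with 1 \<le> x!j \<le> n j
  (coordinates indexed 0..d-1).\<close>

definition ferrers_hypergraph :: "nat \<Rightarrow> (nat \<Rightarrow> nat) \<Rightarrow> nat list set \<Rightarrow> bool" where
  "ferrers_hypergraph d n F \<longleftrightarrow>
     F \<subseteq> {x. length x = d \<and> (\<forall>j<d. 1 \<le> x ! j \<and> x ! j \<le> n j)} \<and>
     (\<forall>x\<in>F. \<forall>y. length y = d \<and> (\<forall>j<d. 1 \<le> y ! j \<and> y ! j \<le> x ! j) \<longrightarrow> y \<in> F)"

definition alpha :: "nat \<Rightarrow> nat \<Rightarrow> nat list set \<Rightarrow> nat" where
  "alpha d k F = card {x\<in>F. sum_list x = k + d}"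

definition macaulay_rep :: "nat \<Rightarrow> nat \<Rightarrow> (nat \<Rightarrow> nat) \<Rightarrow> nat \<Rightarrow> bool" where
  "macaulay_rep b j m r \<longleftrightarrow>
     1 \<le> r \<and> r \<le> j \<and> r \<le> m r \<and> (\<forall>t. r \<le> t \<and> t < j \<longrightarrow> m t < m (Suc t)) \<and>
     b = (\<Sum>t=r..j. m t choose t)"

definition macaulay_upper :: "nat \<Rightarrow> nat \<Rightarrow> nat" where
  "macaulay_upper b j =
     (if b = 0 then 0
      else (THE v. \<exists>m r. macaulay_rep b j m r \<and> v = (\<Sum>t=r..j. (m t + 1) choose (t + 1))))"

definition O_sequence :: "(nat \<Rightarrow> nat) \<Rightarrow> bool" where
  "O_sequence h \<longleftrightarrow> h 0 = 1 \<and> (\<forall>i\<ge>1. h (Suc i) \<le> macaulay_upper (h i) i)"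

definition trunc_seq :: "(nat \<Rightarrow> nat) \<Rightarrow> nat \<Rightarrow> nat \<Rightarrow> nat" where
  "trunc_seq h s i = (if i \<le> s then h i else 0)"

end

theory Submission
  imports Defs "HOL-Library.Multiset"
begin

text \<open>Grid points correspond to monomials in \<open>d\<close> variables, Ferrers hypergraphs to order
  ideals of monomials, and \<open>alpha k\<close> counts the monomials of degree \<open>k\<close>.
  Necessity is Macaulay's theorem \<open>|B| \<le> |shadow B|\<^bsup>\<langle>k\<rangle>\<^esup>\<close> for a family \<open>B\<close> of monomials of
  degree \<open>k + 1\<close>: compressions replace \<open>B\<close> by a strongly stable family of the same size
  without enlarging the shadow, and for strongly stable families the bound follows by a
  double induction that splits off the smallest variable.
  Sufficiency: the initial colex segments of sizes \<open>h\<^sub>k\<close> form a down-closed family, because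
  the multisets all of whose shadow lies in a segment of size \<open>b\<close> form a segment of size
  \<open>b\<^bsup>\<langle>k\<rangle>\<^esup>\<close>.\<close>

section \<open>Greedy binomial expansions\<close>

text \<open>For \<open>k \<ge> 1\<close>, \<open>binom_floor k b\<close> is the largest \<open>m\<close> with \<open>m choose k \<le> b\<close>.\<close>

definition binom_floor :: "nat \<Rightarrow> nat \<Rightarrow> nat" where
  "binom_floor k b = (LEAST m. b < Suc m choose k)"

lemma Suc_le_add_choose: "1 \<le> k \<Longrightarrow> Suc b \<le> (b + k) choose k"
proof (induction k rule: nat_induct_at_least)
  case (Suc k)
  have "(b + Suc k) choose Suc k = (b + k choose k) + (b + k choose Suc k)" by simp
  then show ?case using Suc by linarith
qed simp

lemma less_Suc_binom_floor_choose: "1 \<le> k \<Longrightarrow> b < Suc (binom_floor k b) choose k"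
  unfolding binom_floor_def
proof (rule LeastI)
  assume "1 \<le> k"
  then show "b < Suc (b + k - 1) choose k"
    using Suc_le_add_choose[of k b] by simp
qed

lemma binom_floor_choose_le: "1 \<le> k \<Longrightarrow> binom_floor k b choose k \<le> b"
proof (cases "binom_floor k b")
  case (Suc m)
  then have "\<not> b < Suc m choose k"
    unfolding binom_floor_def by (metis lessI not_less_Least)
  then show ?thesis using Suc by simp
qed (cases k, auto)

lemma binom_floor_eqI:
  assumes "n choose k \<le> b" "b < Suc n choose k"
  shows "binom_floor k b = n"
  unfolding binom_floor_def
proof (rule Least_equality)
  fix y assume "b < Suc y choose k"
  with assms(1) have "\<not> Suc y \<le> n" by (metis binomial_right_mono leD order_trans)
  then show "n \<le> y" by simp
qed fact

lemma binom_floor_mono: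
  assumes "1 \<le> k" "b \<le> c" shows "binom_floor k b \<le> binom_floor k c"
proof (rule ccontr)
  assume "\<not> binom_floor k b \<le> binom_floor k c"
  then have "Suc (binom_floor k c) choose k \<le> binom_floor k b choose k"
    by (simp add: binomial_right_mono)
  with binom_floor_choose_le[OF assms(1), of b] less_Suc_binom_floor_choose[OF assms(1), of c] assms(2)
  show False by simp
qed

lemma less_Suc_choose_Suc_imp_le: "b < Suc n choose Suc k \<Longrightarrow> k \<le> n"
  by (metis Suc_le_mono binomial_eq_0 less_nat_zero_code linorder_not_le)

lemma greedy_binomial_step:
  assumes "1 \<le> k"
  obtains m where "m choose k \<le> b" "b < Suc m choose k" "binom_floor k b = m"
    "b - (m choose k) < m choose (k - 1)" "k - 1 \<le> m"
proof
  let ?m = "binom_floor k b"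
  have "?m choose k \<le> b" "b < Suc ?m choose k"
    using binom_floor_choose_le less_Suc_binom_floor_choose assms by auto
  moreover have "Suc ?m choose k = (?m choose (k - 1)) + (?m choose k)"
    using assms by (metis Suc_diff_1 binomial_Suc_Suc less_le_trans zero_less_one)
  ultimately show "?m choose k \<le> b" "b < Suc ?m choose k" "b - (?m choose k) < ?m choose (k - 1)"
    by linarith+
  show "k - 1 \<le> ?m"
    using \<open>b < Suc ?m choose k\<close> less_Suc_choose_Suc_imp_le assms by (cases k) auto
qed simp

text \<open>The Macaulay function \<open>b\<^bsup>\<langle>k\<rangle>\<^esup>\<close>, computed by splitting off the largest \<open>m choose k \<le> b\<close>.\<close>

fun macaulay_fun :: "nat \<Rightarrow> nat \<Rightarrow> nat" where
  "macaulay_fun 0 b = b"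
| "macaulay_fun (Suc k) b = (Suc (binom_floor (Suc k) b) choose Suc (Suc k))
     + macaulay_fun k (b - (binom_floor (Suc k) b choose Suc k))"

declare macaulay_fun.simps(2)[simp del]

lemma macaulay_fun_Suc_eq:
  "n choose Suc k \<le> b \<Longrightarrow> b < Suc n choose Suc k \<Longrightarrow>
   macaulay_fun (Suc k) b = (Suc n choose Suc (Suc k)) + macaulay_fun k (b - (n choose Suc k))"
  using binom_floor_eqI[of n "Suc k" b] by (simp add: macaulay_fun.simps(2))

lemma macaulay_fun_0 [simp]: "macaulay_fun k 0 = 0"
proof (induction k)
  case (Suc k)
  have "binom_floor (Suc k) 0 = k" by (rule binom_floor_eqI) auto
  then show ?case using Suc by (simp add: macaulay_fun.simps(2))
qed simp

section \<open>Initial colex segments of multisets\<close>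

text \<open>\<open>colex_seg p k b\<close> consists of the first \<open>b\<close> multisets of size \<open>k\<close> over \<open>{p..}\<close> in the
  colexicographic order (compare largest elements first): all multisets of size \<open>k\<close> below the
  greedy top value \<open>p + m - k\<close>, followed by that value added to a shorter segment.\<close>

fun colex_seg :: "nat \<Rightarrow> nat \<Rightarrow> nat \<Rightarrow> nat multiset set" where
  "colex_seg p 0 b = (if b = 0 then {} else {{#}})"
| "colex_seg p (Suc k) b = multisets_of_size {p..<p + binom_floor (Suc k) b - k} (Suc k) \<union>
      add_mset (p + binom_floor (Suc k) b - k) ` colex_seg p k (b - (binom_floor (Suc k) b choose Suc k))"

declare colex_seg.simps(2)[simp del]

lemma colex_seg_Suc_eq:
  "n choose Suc k \<le> b \<Longrightarrow> b < Suc n choose Suc k \<Longrightarrow>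
   colex_seg p (Suc k) b = multisets_of_size {p..<p + n - k} (Suc k) \<union>
     add_mset (p + n - k) ` colex_seg p k (b - (n choose Suc k))"
  using binom_floor_eqI[of n "Suc k" b] by (simp add: colex_seg.simps(2))

lemma colex_seg_SucE:
  obtains m where "m choose Suc k \<le> b" "b < Suc m choose Suc k" "k \<le> m"
    "b - (m choose Suc k) < m choose k"
    "colex_seg p (Suc k) b = multisets_of_size {p..<p + m - k} (Suc k) \<union>
       add_mset (p + m - k) ` colex_seg p k (b - (m choose Suc k))"
proof -
  obtain m where "m choose Suc k \<le> b" "b < Suc m choose Suc k" "binom_floor (Suc k) b = m"
      "b - (m choose Suc k) < m choose k" "k \<le> m"
    using greedy_binomial_step[of "Suc k" b] by auto
  with that show ?thesis by (simp add: colex_seg.simps(2))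
qed

lemma Suc_le_binom_floor_if_pos:
  assumes "b < Suc m choose Suc k" "0 < b" shows "Suc k \<le> m"
proof (rule ccontr)
  assume "\<not> Suc k \<le> m"
  then have "Suc m choose Suc k \<le> 1"
    by (metis One_nat_def binomial_n_n binomial_right_mono not_less_eq_eq)
  with assms show False by simp
qed

lemma colex_seg_0 [simp]: "colex_seg p k 0 = {}"
proof (induction k)
  case (Suc k)
  have "binom_floor (Suc k) 0 = k" by (rule binom_floor_eqI) auto
  then show ?case using Suc by (simp add: colex_seg.simps(2))
qed simp

lemma size_colex_seg: "M \<in> colex_seg p k b \<Longrightarrow> size M = k"
  by (induction k arbitrary: b M)
    (auto simp: multisets_of_size_def colex_seg.simps(2) split: if_splits)

lemma colex_seg_subset:
  "b \<le> n choose k \<Longrightarrow> colex_seg p k b \<subseteq> multisets_of_size {p..<p + Suc n - k} k"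
proof (induction k arbitrary: b n)
  case (Suc k)
  show ?case
  proof (cases "b = 0")
    case False
    obtain m where lo: "m choose Suc k \<le> b" and hi: "b < Suc m choose Suc k"
      and rem: "b - (m choose Suc k) < m choose k"
      and seg: "colex_seg p (Suc k) b = multisets_of_size {p..<p + m - k} (Suc k) \<union>
                  add_mset (p + m - k) ` colex_seg p k (b - (m choose Suc k))"
      by (rule colex_seg_SucE)
    have km: "Suc k \<le> m" using Suc_le_binom_floor_if_pos[OF hi] False by simp
    have kn: "Suc k \<le> n"
      using Suc.prems False by (metis binomial_eq_0 gr0I leI le_zero_eq)
    have mn: "m \<le> n"
    proof (rule ccontr)
      assume "\<not> m \<le> n"
      then have "Suc n \<le> m" by simp
      then have "Suc n choose Suc k \<le> m choose Suc k" by (rule binomial_right_mono)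
      moreover have "0 < n choose k" using kn by simp
      ultimately show False using lo Suc.prems by simp
    qed
    have "multisets_of_size {p..<p + m - k} (Suc k) \<subseteq> multisets_of_size {p..<p + Suc n - Suc k} (Suc k)"
      by (rule multisets_of_size_mono) (use mn km in auto)
    moreover have "add_mset (p + m - k) ` colex_seg p k (b - (m choose Suc k))
        \<subseteq> multisets_of_size {p..<p + Suc n - Suc k} (Suc k)"
    proof (cases "m = n")
      case True
      then show ?thesis using Suc.prems by simp
    next
      case False
      have "colex_seg p k (b - (m choose Suc k)) \<subseteq> multisets_of_size {p..<p + Suc m - k} k"
        using Suc.IH rem by simp
      moreover have "p \<le> p + m - k" "p + m - k < p + n - k" "Suc (p + m) - k \<le> p + n - k"
        using False mn km by auto
      ultimately show ?thesis by (fastforce simp: multisets_of_size_def subset_iff)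
    qed
    ultimately show ?thesis using seg by blast
  qed simp
qed (auto simp: multisets_of_size_def)

lemma finite_colex_seg [simp]: "finite (colex_seg p k b)"
proof (cases k)
  case (Suc k')
  then show ?thesis
    using colex_seg_subset[of b "b + k" k p] Suc_le_add_choose[of k b]
    by (auto intro: finite_subset)
qed simp

lemma card_colex_seg: "1 \<le> k \<or> b \<le> 1 \<Longrightarrow> card (colex_seg p k b) = b"
proof (induction k arbitrary: b)
  case (Suc k)
  obtain m where lo: "m choose Suc k \<le> b" and km: "k \<le> m"
    and rem: "b - (m choose Suc k) < m choose k"
    and seg: "colex_seg p (Suc k) b = multisets_of_size {p..<p + m - k} (Suc k) \<union>
                add_mset (p + m - k) ` colex_seg p k (b - (m choose Suc k))"
    by (rule colex_seg_SucE)
  let ?rest = "colex_seg p k (b - (m choose Suc k))"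
  have "card ?rest = b - (m choose Suc k)"
    using Suc.IH rem by (cases k) auto
  then have "card (add_mset (p + m - k) ` ?rest) = b - (m choose Suc k)"
    by (simp add: card_image inj_on_def)
  moreover have "card (multisets_of_size {p..<p + m - k} (Suc k)) = m choose Suc k"
    using km by (simp add: card_multisets_of_size)
  moreover have "multisets_of_size {p..<p + m - k} (Suc k) \<inter> add_mset (p + m - k) ` ?rest = {}"
    by (auto simp: multisets_of_size_def)
  ultimately show ?case
    unfolding seg using lo by (subst card_Un_disjoint) auto
qed auto

lemma colex_seg_mono: "b \<le> c \<Longrightarrow> colex_seg p k b \<subseteq> colex_seg p k c"
proof (induction k arbitrary: b c)
  case (Suc k)
  define mb where "mb = binom_floor (Suc k) b"
  define mc where "mc = binom_floor (Suc k) c"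
  have hib: "b < Suc mb choose Suc k" using less_Suc_binom_floor_choose[of "Suc k" b] by (simp add: mb_def)
  have "mb \<le> mc" using binom_floor_mono[of "Suc k" b c] Suc.prems by (simp add: mb_def mc_def)
  then consider "mb = mc" | "mb < mc" by linarith
  then show ?case
  proof cases
    case 1
    have "b - (mb choose Suc k) \<le> c - (mc choose Suc k)" using 1 Suc.prems by simp
    from Suc.IH[OF this] show ?thesis using 1 by (auto simp: mb_def mc_def colex_seg.simps(2))
  next
    case 2
    have km: "k \<le> mb" using less_Suc_choose_Suc_imp_le[OF hib] .
    have "colex_seg p (Suc k) b \<subseteq> multisets_of_size {p..<p + Suc (Suc mb) - Suc k} (Suc k)"
      by (rule colex_seg_subset) (use hib in simp)
    also have "\<dots> \<subseteq> multisets_of_size {p..<p + mc - k} (Suc k)"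
      by (rule multisets_of_size_mono) (use 2 km in auto)
    also have "\<dots> \<subseteq> colex_seg p (Suc k) c" by (simp add: mc_def colex_seg.simps(2))
    finally show ?thesis .
  qed
qed auto

lemma colex_seg_ge:
  assumes "M \<in> colex_seg p k b" "x \<in># M" shows "p \<le> x"
proof (cases k)
  case (Suc k')
  then have "b \<le> (b + k) choose k" using Suc_le_add_choose[of k b] by simp
  then show ?thesis
    using colex_seg_subset[of b "b + k" k p] assms by (force simp: multisets_of_size_def)
qed (use assms in \<open>auto split: if_splits\<close>)

lemma colex_seg_subset_less:
  "c < m choose k \<Longrightarrow> k \<le> m \<Longrightarrow> colex_seg p k c \<subseteq> multisets_of_size {p..<Suc (p + m - k)} k"
  using colex_seg_subset[of c m k p] by (simp add: Suc_diff_le)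

lemma colex_seg_shift_down:
  "M \<in> colex_seg p k b \<Longrightarrow> x \<in># M \<Longrightarrow> p \<le> y \<Longrightarrow> y < x \<Longrightarrow> add_mset y (M - {#x#}) \<in> colex_seg p k b"
proof (induction k arbitrary: b M x)
  case (Suc k)
  obtain m where km: "k \<le> m" and rem: "b - (m choose Suc k) < m choose k"
    and seg: "colex_seg p (Suc k) b = multisets_of_size {p..<p + m - k} (Suc k) \<union>
                add_mset (p + m - k) ` colex_seg p k (b - (m choose Suc k))"
    by (rule colex_seg_SucE)
  define v where "v = p + m - k"
  define C where "C = colex_seg p k (b - (m choose Suc k))"
  have seg': "colex_seg p (Suc k) b = multisets_of_size {p..<v} (Suc k) \<union> add_mset v ` C"
    using seg by (simp add: v_def C_def)
  have C: "C \<subseteq> multisets_of_size {p..<Suc v} k"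
    using colex_seg_subset_less[OF rem km] by (simp add: v_def C_def)
  from Suc.prems(1) consider "M \<in> multisets_of_size {p..<v} (Suc k)"
    | M' where "M = add_mset v M'" "M' \<in> C" unfolding seg' by blast
  then show ?case
  proof cases
    case 1
    then have "add_mset y (M - {#x#}) \<in> multisets_of_size {p..<v} (Suc k)"
      using Suc.prems by (auto simp: multisets_of_size_def size_Diff_singleton dest: in_diffD)
    then show ?thesis unfolding seg' by blast
  next
    case 2
    show ?thesis
    proof (cases "x = v")
      case True
      show ?thesis
      proof (cases "v \<in># M'")
        case True
        have "add_mset y (M' - {#v#}) \<in> C"
          using Suc.IH[OF 2(2)[unfolded C_def] True Suc.prems(3)] Suc.prems(4) \<open>x = v\<close>
          by (simp add: C_def)
        moreover have "add_mset y (M - {#x#}) = add_mset v (add_mset y (M' - {#v#}))"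
          using 2 True \<open>x = v\<close> by (simp add: add_mset_commute)
        ultimately show ?thesis unfolding seg' by blast
      next
        case False
        have "M' \<in> multisets_of_size {p..<v} k"
          using 2 C False by (auto simp: multisets_of_size_def subset_iff less_Suc_eq)
        then have "add_mset y M' \<in> multisets_of_size {p..<v} (Suc k)"
          using Suc.prems True by (auto simp: multisets_of_size_def)
        then show ?thesis using 2 True unfolding seg' by simp
      qed
    next
      case False
      then have "x \<in># M'" using 2 Suc.prems(2) by auto
      then have "add_mset y (M' - {#x#}) \<in> C"
        using Suc.IH 2(2) Suc.prems(3,4) by (simp add: C_def)
      moreover have "add_mset y (M - {#x#}) = add_mset v (add_mset y (M' - {#x#}))"
        using 2 False \<open>x \<in># M'\<close> by (simp add: add_mset_commute)
      ultimately show ?thesis unfolding seg' by blast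
    qed
  qed
qed (auto split: if_splits)

lemma colex_seg_full: "colex_seg p k (n choose k) = multisets_of_size {p..<p + Suc n - k} k"
proof (cases k)
  case (Suc k')
  have "card (multisets_of_size {p..<p + Suc n - k} k) = n choose k"
    using Suc by (cases "k \<le> Suc n") (auto simp: card_multisets_of_size)
  moreover have "card (colex_seg p k (n choose k)) = n choose k"
    using card_colex_seg[of k] Suc by simp
  moreover have "finite (multisets_of_size {p..<p + Suc n - k} k)" by auto
  ultimately show ?thesis
    using card_subset_eq[OF _ colex_seg_subset[of "n choose k" n k p]] by simp
qed simp

lemma multisets_of_size_Suc_split:
  assumes "a \<le> v"
  shows "multisets_of_size {a..<Suc v} (Suc k) =
         multisets_of_size {a..<v} (Suc k) \<union> add_mset v ` multisets_of_size {a..<Suc v} k"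
proof (intro equalityI subsetI)
  fix N assume N: "N \<in> multisets_of_size {a..<Suc v} (Suc k)"
  show "N \<in> multisets_of_size {a..<v} (Suc k) \<union> add_mset v ` multisets_of_size {a..<Suc v} k"
  proof (cases "v \<in># N")
    case True
    then have "N - {#v#} \<in> multisets_of_size {a..<Suc v} k"
      using N by (auto simp: multisets_of_size_def size_Diff_singleton dest: in_diffD)
    moreover have "N = add_mset v (N - {#v#})" using True by simp
    ultimately show ?thesis by blast
  next
    case False
    then show ?thesis using N by (auto simp: multisets_of_size_def subset_iff less_Suc_eq)
  qed
qed (use assms in \<open>auto simp: multisets_of_size_def\<close>)

section \<open>Shadows\<close>

definition shadow :: "'a multiset set \<Rightarrow> 'a multiset set" where
  "shadow B = {M - {#x#} | M x. M \<in> B \<and> x \<in># M}"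

definition shadow_preimage :: "nat \<Rightarrow> 'a multiset set \<Rightarrow> 'a multiset set" where
  "shadow_preimage k A = {N. size N = Suc k \<and> (\<forall>x\<in>#N. N - {#x#} \<in> A)}"

lemma in_shadowI: "M \<in> B \<Longrightarrow> x \<in># M \<Longrightarrow> M - {#x#} \<in> shadow B"
  unfolding shadow_def by blast

lemma finite_shadow:
  assumes "finite B" shows "finite (shadow B)"
proof -
  have "shadow B = (\<Union>M\<in>B. (\<lambda>x. M - {#x#}) ` set_mset M)" unfolding shadow_def by blast
  then show ?thesis using assms by simp
qed

lemma subset_shadow_preimage_shadow:
  "\<forall>M\<in>B. size M = Suc k \<Longrightarrow> B \<subseteq> shadow_preimage k (shadow B)"
  by (auto simp: shadow_preimage_def intro: in_shadowI)

lemma shadow_preimage_empty [simp]: "shadow_preimage k {} = {}"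
  by (auto simp: shadow_preimage_def)

lemma shadow_preimage_mono: "A \<subseteq> B \<Longrightarrow> shadow_preimage k A \<subseteq> shadow_preimage k B"
  unfolding shadow_preimage_def by auto

lemma shadow_preimage_elem:
  assumes k: "1 \<le> k" and N: "N \<in> shadow_preimage k A" and x: "x \<in># N"
  shows "\<exists>M\<in>A. x \<in># M"
proof -
  have "size (N - {#x#}) = k" using N x by (simp add: shadow_preimage_def size_Diff_singleton)
  then have "N - {#x#} \<noteq> {#}" using k by auto
  then obtain y where y: "y \<in># N - {#x#}" by (meson multiset_nonemptyE)
  then have "N - {#y#} \<in> A" using N by (auto simp: shadow_preimage_def dest: in_diffD)
  moreover have "x \<in># N - {#y#}" using x y by (cases "x = y") (auto simp: in_diff_count)
  ultimately show ?thesis by blast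
qed

lemma shadow_preimage_subset:
  assumes "1 \<le> k" "A \<subseteq> multisets_of_size S k"
  shows "shadow_preimage k A \<subseteq> multisets_of_size S (Suc k)"
proof
  fix N assume N: "N \<in> shadow_preimage k A"
  have "x \<in> S" if "x \<in># N" for x
    using shadow_preimage_elem[OF assms(1) N that] assms(2) by (auto simp: multisets_of_size_def)
  then show "N \<in> multisets_of_size S (Suc k)"
    using N by (auto simp: multisets_of_size_def shadow_preimage_def)
qed

lemma finite_shadow_preimage:
  assumes "1 \<le> k" "finite A" shows "finite (shadow_preimage k A)"
proof (rule finite_subset)
  show "shadow_preimage k A \<subseteq> multisets_of_size (\<Union>M\<in>A. set_mset M) (Suc k)"
  proof
    fix N assume N: "N \<in> shadow_preimage k A"
    then show "N \<in> multisets_of_size (\<Union>M\<in>A. set_mset M) (Suc k)"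
      using shadow_preimage_elem[OF assms(1) N]
      by (auto simp: multisets_of_size_def shadow_preimage_def)
  qed
qed (use assms(2) in auto)

section \<open>Shadow preimages of initial segments\<close>

lemma shadow_preimage_add_top_subset:
  assumes C: "C \<subseteq> multisets_of_size {p..<Suc v} k" and pv: "p \<le> v"
  shows "shadow_preimage (Suc k) (multisets_of_size {p..<v} (Suc k) \<union> add_mset v ` C) \<subseteq>
         multisets_of_size {p..<v} (Suc (Suc k)) \<union> add_mset v ` shadow_preimage k C"
    (is "shadow_preimage (Suc k) ?A \<subseteq> _")
proof
  fix N assume N: "N \<in> shadow_preimage (Suc k) ?A"
  have "add_mset v ` C \<subseteq> multisets_of_size {p..<Suc v} (Suc k)"
  proof (rule image_subsetI)
    fix M assume "M \<in> C"
    then have "set_mset M \<subseteq> {p..<Suc v}" "size M = k"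
      using C by (auto simp: multisets_of_size_def)
    then show "add_mset v M \<in> multisets_of_size {p..<Suc v} (Suc k)"
      using pv by (simp add: multisets_of_size_def)
  qed
  then have A_range: "?A \<subseteq> multisets_of_size {p..<Suc v} (Suc k)"
    using multisets_of_size_mono[of "{p..<v}" "{p..<Suc v}"] by auto
  have N_range: "N \<in> multisets_of_size {p..<Suc v} (Suc (Suc k))"
    using shadow_preimage_subset[OF _ A_range] N by auto
  show "N \<in> multisets_of_size {p..<v} (Suc (Suc k)) \<union> add_mset v ` shadow_preimage k C"
  proof (cases "v \<in># N")
    case True
    define N' where "N' = N - {#v#}"
    have N_eq: "N = add_mset v N'" using True by (simp add: N'_def)
    have "N' - {#x#} \<in> C" if x: "x \<in># N'" for x
    proof -
      have "N - {#x#} \<in> ?A" using N x N_eq by (simp add: shadow_preimage_def)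
      moreover have "N - {#x#} = add_mset v (N' - {#x#})" using x N_eq by simp
      moreover have "add_mset v (N' - {#x#}) \<notin> multisets_of_size {p..<v} (Suc k)"
        by (simp add: multisets_of_size_def)
      ultimately show ?thesis by auto
    qed
    then have "N' \<in> shadow_preimage k C"
      using N N_eq by (simp add: shadow_preimage_def)
    then show ?thesis using N_eq by blast
  next
    case False
    then show ?thesis using N_range by (auto simp: multisets_of_size_def less_Suc_eq)
  qed
qed

lemma shadow_preimage_add_top_supset:
  assumes C: "C \<subseteq> multisets_of_size {p..<Suc v} k" and k: "1 \<le> k \<or> C = {}"
  shows "multisets_of_size {p..<v} (Suc (Suc k)) \<union> add_mset v ` shadow_preimage k C \<subseteq>
         shadow_preimage (Suc k) (multisets_of_size {p..<v} (Suc k) \<union> add_mset v ` C)"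
    (is "_ \<subseteq> shadow_preimage (Suc k) ?A")
proof
  fix N assume "N \<in> multisets_of_size {p..<v} (Suc (Suc k)) \<union> add_mset v ` shadow_preimage k C"
  then consider "N \<in> multisets_of_size {p..<v} (Suc (Suc k))"
    | N' where "N = add_mset v N'" "N' \<in> shadow_preimage k C" by blast
  then show "N \<in> shadow_preimage (Suc k) ?A"
  proof cases
    case 1
    then show ?thesis
      by (auto simp: shadow_preimage_def multisets_of_size_def size_Diff_singleton dest: in_diffD)
  next
    case 2
    have "N' \<in> multisets_of_size {p..<Suc v} (Suc k)"
      using 2(2) k shadow_preimage_subset[OF _ C] by auto
    then have N'_range: "v \<notin># N' \<Longrightarrow> N' \<in> multisets_of_size {p..<v} (Suc k)"
      by (auto simp: multisets_of_size_def less_Suc_eq)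
    have "N - {#x#} \<in> ?A" if x: "x \<in># N" for x
    proof (cases "x = v")
      case True
      show ?thesis
      proof (cases "v \<in># N'")
        case True
        then have "N' = add_mset v (N' - {#v#})" "N' - {#v#} \<in> C"
          using 2(2) by (auto simp: shadow_preimage_def)
        then show ?thesis using 2(1) \<open>x = v\<close> by (metis UnI2 add_mset_remove_trivial imageI)
      qed (use 2 N'_range \<open>x = v\<close> in auto)
    next
      case False
      then have "x \<in># N'" using 2 x by auto
      then show ?thesis using 2 False by (auto simp: shadow_preimage_def)
    qed
    then show ?thesis using 2 by (simp add: shadow_preimage_def)
  qed
qed

lemma shadow_preimage_ne_multisets_of_size:
  assumes "C \<subseteq> multisets_of_size S k" "C \<noteq> multisets_of_size S k" "v \<in> S"
  shows "shadow_preimage k C \<noteq> multisets_of_size S (Suc k)"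
proof -
  obtain M where M: "M \<in> multisets_of_size S k" "M \<notin> C" using assms(1,2) by blast
  then have "add_mset v M \<in> multisets_of_size S (Suc k)"
    using assms(3) by (auto simp: multisets_of_size_def)
  moreover have "add_mset v M \<notin> shadow_preimage k C"
    using M(2) by (auto simp: shadow_preimage_def)
  ultimately show ?thesis by blast
qed

lemma shadow_preimage_colex_seg:
  "1 \<le> k \<or> b = 0 \<Longrightarrow> shadow_preimage k (colex_seg p k b) = colex_seg p (Suc k) (macaulay_fun k b)"
proof (induction k arbitrary: b)
  case (Suc k)
  obtain m where lo: "m choose Suc k \<le> b" and hi: "b < Suc m choose Suc k" and km: "k \<le> m"
    and rem: "b - (m choose Suc k) < m choose k"
    and seg: "colex_seg p (Suc k) b = multisets_of_size {p..<p + m - k} (Suc k) \<union>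
                add_mset (p + m - k) ` colex_seg p k (b - (m choose Suc k))"
    by (rule colex_seg_SucE)
  define v where "v = p + m - k"
  define b' where "b' = b - (m choose Suc k)"
  define C where "C = colex_seg p k b'"
  have C: "C \<subseteq> multisets_of_size {p..<Suc v} k"
    using colex_seg_subset_less[OF rem km] by (simp add: v_def C_def b'_def)
  have k_cases: "1 \<le> k \<or> b' = 0" using rem by (cases k) (auto simp: b'_def)
  then have "1 \<le> k \<or> C = {}" by (auto simp: C_def)
  then have "shadow_preimage (Suc k) (multisets_of_size {p..<v} (Suc k) \<union> add_mset v ` C) =
      multisets_of_size {p..<v} (Suc (Suc k)) \<union> add_mset v ` shadow_preimage k C"
    by (intro subset_antisym shadow_preimage_add_top_subset[OF C] shadow_preimage_add_top_supset[OF C])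
      (use km in \<open>simp_all add: v_def\<close>)
  then have top: "shadow_preimage (Suc k) (colex_seg p (Suc k) b) =
      multisets_of_size {p..<v} (Suc (Suc k)) \<union> add_mset v ` shadow_preimage k C"
    using seg by (simp add: v_def C_def b'_def)
  have IH: "shadow_preimage k C = colex_seg p (Suc k) (macaulay_fun k b')"
    using Suc.IH k_cases by (simp add: C_def)
  have card_C: "card C = b'" using card_colex_seg k_cases by (auto simp: C_def)
  have card_full: "card (multisets_of_size {p..<Suc v} k) = m choose k"
    using km by (simp add: card_multisets_of_size v_def Suc_diff_le)
  have "shadow_preimage k C \<subset> multisets_of_size {p..<Suc v} (Suc k)"
  proof
    show "shadow_preimage k C \<subseteq> multisets_of_size {p..<Suc v} (Suc k)"
      using k_cases shadow_preimage_subset[OF _ C] by (auto simp: C_def)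
    show "shadow_preimage k C \<noteq> multisets_of_size {p..<Suc v} (Suc k)"
      by (rule shadow_preimage_ne_multisets_of_size[OF C])
        (use card_C card_full rem km in \<open>auto simp: b'_def v_def\<close>)
  qed
  then have "card (shadow_preimage k C) < card (multisets_of_size {p..<Suc v} (Suc k))"
    by (rule psubset_card_mono[rotated]) auto
  then have small: "macaulay_fun k b' < Suc m choose Suc k"
    using IH card_colex_seg[of "Suc k" "macaulay_fun k b'" p] km
    by (simp add: card_multisets_of_size v_def Suc_diff_le)
  have mf: "macaulay_fun (Suc k) b = (Suc m choose Suc (Suc k)) + macaulay_fun k b'"
    using macaulay_fun_Suc_eq[OF lo hi] by (simp add: b'_def)
  have "colex_seg p (Suc (Suc k)) (macaulay_fun (Suc k) b) =
      multisets_of_size {p..<v} (Suc (Suc k)) \<union> add_mset v ` colex_seg p (Suc k) (macaulay_fun k b')"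
    using colex_seg_Suc_eq[of "Suc m" "Suc k" "macaulay_fun (Suc k) b" p] mf small km
    by (simp add: v_def)
  then show ?case using top IH by simp
qed simp

lemma card_shadow_preimage_colex_seg:
  "1 \<le> k \<Longrightarrow> card (shadow_preimage k (colex_seg p k b)) = macaulay_fun k b"
  using shadow_preimage_colex_seg[of k b p] card_colex_seg[of "Suc k" "macaulay_fun k b" p] by simp

lemma macaulay_fun_mono:
  assumes "1 \<le> k" "b \<le> c" shows "macaulay_fun k b \<le> macaulay_fun k c"
proof -
  have "shadow_preimage k (colex_seg 0 k b) \<subseteq> shadow_preimage k (colex_seg 0 k c)"
    by (rule shadow_preimage_mono[OF colex_seg_mono[OF assms(2)]])
  then have "card (shadow_preimage k (colex_seg 0 k b)) \<le> card (shadow_preimage k (colex_seg 0 k c))"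
    by (rule card_mono[OF finite_shadow_preimage[OF assms(1) finite_colex_seg]])
  then show ?thesis using card_shadow_preimage_colex_seg[OF assms(1)] by simp
qed

lemma colex_seg_add_top:
  assumes c: "c \<le> n choose k" and kn: "k \<le> n"
  shows "multisets_of_size {q..<q + n - k} (Suc k) \<union> add_mset (q + n - k) ` colex_seg q k c =
         colex_seg q (Suc k) ((n choose Suc k) + c)"
proof (cases "c < n choose k")
  case True
  have "colex_seg q (Suc k) ((n choose Suc k) + c) =
      multisets_of_size {q..<q + n - k} (Suc k) \<union>
      add_mset (q + n - k) ` colex_seg q k ((n choose Suc k) + c - (n choose Suc k))"
    by (rule colex_seg_Suc_eq) (use True in auto)
  then show ?thesis by simp
next
  case False
  then have "c = n choose k" using c by simp
  then have "multisets_of_size {q..<q + n - k} (Suc k) \<union> add_mset (q + n - k) ` colex_seg q k c =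
      multisets_of_size {q..<Suc (q + n - k)} (Suc k)"
    using multisets_of_size_Suc_split[of q "q + n - k" k] colex_seg_full[of q k n] kn
    by (simp add: Suc_diff_le)
  also have "\<dots> = colex_seg q (Suc k) (Suc n choose Suc k)"
    using colex_seg_full[of q "Suc k" "Suc n"] kn by (simp add: Suc_diff_le)
  finally show ?thesis using \<open>c = n choose k\<close> by (simp add: add.commute)
qed

lemma multisets_of_size_avoiding:
  "M \<in> multisets_of_size {p..<v} k \<Longrightarrow> p \<notin># M \<Longrightarrow> M \<in> multisets_of_size {Suc p..<v} k"
  by (auto simp: multisets_of_size_def subset_iff Suc_le_eq order.order_iff_strict)

lemma avoiding_multisets_of_size_add_top:
  assumes "p < v"
  shows "{M \<in> multisets_of_size {p..<v} k \<union> add_mset v ` C. p \<notin># M} =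
         multisets_of_size {Suc p..<v} k \<union> add_mset v ` {M \<in> C. p \<notin># M}"
  using assms by (auto simp: multisets_of_size_def subset_iff Suc_le_eq order.order_iff_strict)

lemma colex_seg_avoiding_bottom:
  "\<exists>c. {M \<in> colex_seg p k b. p \<notin># M} = colex_seg (Suc p) k c \<and> (1 \<le> k \<or> c \<le> 1)"
proof (induction k arbitrary: b)
  case 0
  show ?case by (rule exI[of _ "min b 1"]) auto
next
  case (Suc k)
  show ?case
  proof (cases "b = 0")
    case False
    obtain m where hi: "b < Suc m choose Suc k" and km: "k \<le> m"
      and rem: "b - (m choose Suc k) < m choose k"
      and seg: "colex_seg p (Suc k) b = multisets_of_size {p..<p + m - k} (Suc k) \<union>
                  add_mset (p + m - k) ` colex_seg p k (b - (m choose Suc k))"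
      by (rule colex_seg_SucE)
    have km': "Suc k \<le> m" using Suc_le_binom_floor_if_pos[OF hi] False by simp
    define C where "C = colex_seg p k (b - (m choose Suc k))"
    obtain c where c: "{M \<in> C. p \<notin># M} = colex_seg (Suc p) k c" "1 \<le> k \<or> c \<le> 1"
      using Suc.IH unfolding C_def by blast
    have "{M \<in> C. p \<notin># M} \<subseteq> multisets_of_size {Suc p..<Suc (p + m - k)} k"
    proof
      fix M assume M: "M \<in> {M \<in> C. p \<notin># M}"
      then have "M \<in> multisets_of_size {p..<Suc (p + m - k)} k"
        using colex_seg_subset_less[OF rem km, of p] unfolding C_def by blast
      then show "M \<in> multisets_of_size {Suc p..<Suc (p + m - k)} k"
        using M multisets_of_size_avoiding by blast
    qed
    then have "c \<le> card (multisets_of_size {Suc p..<Suc (p + m - k)} k)"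
      using c card_colex_seg card_mono[OF finite_multisets_of_size] by (metis finite_atLeastLessThan)
    then have c_le: "c \<le> (m - 1) choose k"
      using km' by (simp add: card_multisets_of_size Suc_diff_le)
    have v: "Suc p + (m - 1) - k = p + m - k" using km' by simp
    have "{M \<in> colex_seg p (Suc k) b. p \<notin># M} =
        multisets_of_size {Suc p..<Suc p + (m - 1) - k} (Suc k) \<union>
        add_mset (Suc p + (m - 1) - k) ` colex_seg (Suc p) k c"
      unfolding seg v using avoiding_multisets_of_size_add_top[of p "p + m - k" "Suc k" C] km' c(1)
      by (simp add: C_def)
    also have "\<dots> = colex_seg (Suc p) (Suc k) (((m - 1) choose Suc k) + c)"
      by (rule colex_seg_add_top[OF c_le]) (use km' in simp)
    finally show ?thesis by (intro exI[of _ "((m - 1) choose Suc k) + c"]) simp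
  qed (intro exI[of _ 0], simp)
qed

lemma card_split_add_mset:
  fixes A :: "'a multiset set"
  assumes "finite A"
  shows "card A = card {N. add_mset q N \<in> A} + card {M \<in> A. q \<notin># M}"
proof -
  have A: "A = add_mset q ` {N. add_mset q N \<in> A} \<union> {M \<in> A. q \<notin># M}"
    by (auto simp: image_iff) (metis insert_DiffM)
  have "finite (add_mset q ` {N. add_mset q N \<in> A})"
    using assms by (rule finite_subset[rotated]) auto
  then have "finite {N. add_mset q N \<in> A}"
    by (rule finite_imageD) (simp add: inj_on_def)
  then have "card A = card (add_mset q ` {N. add_mset q N \<in> A}) + card {M \<in> A. q \<notin># M}"
    using assms by (subst A, subst card_Un_disjoint) auto
  then show ?thesis by (simp add: card_image inj_on_def)
qed

section \<open>Strongly stable families\<close>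

text \<open>Relative to the alphabet \<open>{p..}\<close>; for monomials these are the strongly stable
  (Borel-fixed) families.\<close>

definition strongly_stable :: "nat \<Rightarrow> nat multiset set \<Rightarrow> bool" where
  "strongly_stable p A \<longleftrightarrow> (\<forall>M\<in>A. \<forall>x\<in>#M. p \<le> x) \<and>
     (\<forall>M\<in>A. \<forall>x\<in>#M. \<forall>y. p \<le> y \<longrightarrow> y < x \<longrightarrow> add_mset y (M - {#x#}) \<in> A)"

lemma strongly_stable_move_bottom:
  "strongly_stable p A \<Longrightarrow> M \<in> A \<Longrightarrow> x \<in># M \<Longrightarrow> add_mset p (M - {#x#}) \<in> A"
  unfolding strongly_stable_def by (metis le_neq_implies_less insert_DiffM order_refl)

lemma strongly_stable_colex_seg: "strongly_stable p (colex_seg p k b)"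
  unfolding strongly_stable_def using colex_seg_ge colex_seg_shift_down by blast

lemma strongly_stable_avoiding:
  assumes "strongly_stable p A" shows "strongly_stable (Suc p) {M \<in> A. p \<notin># M}"
  unfolding strongly_stable_def
proof (intro conjI ballI allI impI)
  fix M x assume "M \<in> {M \<in> A. p \<notin># M}" "x \<in># M"
  then show "Suc p \<le> x" using assms unfolding strongly_stable_def
    by (metis (mono_tags, lifting) Suc_leI le_neq_implies_less mem_Collect_eq)
next
  fix M x y assume M: "M \<in> {M \<in> A. p \<notin># M}" and x: "x \<in># M" and y: "Suc p \<le> y" "y < x"
  then have "add_mset y (M - {#x#}) \<in> A" using assms unfolding strongly_stable_def by auto
  moreover have "p \<notin># add_mset y (M - {#x#})" using M y by (auto dest: in_diffD)
  ultimately show "add_mset y (M - {#x#}) \<in> {M \<in> A. p \<notin># M}" by simp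
qed

lemma strongly_stable_link:
  assumes "strongly_stable p A" shows "strongly_stable p {N. add_mset p N \<in> A}"
  unfolding strongly_stable_def
proof (intro conjI ballI allI impI)
  fix N x assume "N \<in> {N. add_mset p N \<in> A}" "x \<in># N"
  then show "p \<le> x" using assms unfolding strongly_stable_def by auto
next
  fix N x y assume N: "N \<in> {N. add_mset p N \<in> A}" and x: "x \<in># N" and y: "p \<le> y" "y < x"
  have "add_mset y (add_mset p N - {#x#}) \<in> A"
    using assms N x y unfolding strongly_stable_def by auto
  then show "add_mset y (N - {#x#}) \<in> {N. add_mset p N \<in> A}"
    using x by (simp add: add_mset_commute)
qed

lemma subset_shadow_preimage_link:
  assumes "strongly_stable p A" "\<forall>M\<in>A. size M = Suc k"
  shows "A \<subseteq> shadow_preimage k {N. add_mset p N \<in> A}"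
  using assms strongly_stable_move_bottom by (fastforce simp: shadow_preimage_def)

lemma shadow_preimage_subset_bottom:
  "shadow_preimage k A \<subseteq> add_mset q ` A \<union> shadow_preimage k {M \<in> A. q \<notin># M}"
proof
  fix N assume N: "N \<in> shadow_preimage k A"
  show "N \<in> add_mset q ` A \<union> shadow_preimage k {M \<in> A. q \<notin># M}"
  proof (cases "q \<in># N")
    case True
    then have "N = add_mset q (N - {#q#})" "N - {#q#} \<in> A"
      using N by (auto simp: shadow_preimage_def)
    then show ?thesis by blast
  next
    case False
    then have "N \<in> shadow_preimage k {M \<in> A. q \<notin># M}"
      using N by (auto simp: shadow_preimage_def dest: in_diffD)
    then show ?thesis by blast
  qed
qed

lemma card_shadow_preimage_le_bottom:
  assumes "1 \<le> k" "finite A"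
  shows "card (shadow_preimage k A) \<le> card A + card (shadow_preimage k {M \<in> A. q \<notin># M})"
proof -
  have "card (shadow_preimage k A) \<le> card (add_mset q ` A \<union> shadow_preimage k {M \<in> A. q \<notin># M})"
    using shadow_preimage_subset_bottom[of k A q] assms
      finite_shadow_preimage[OF assms(1), of "{M \<in> A. q \<notin># M}"]
    by (intro card_mono) auto
  also have "\<dots> \<le> card (add_mset q ` A) + card (shadow_preimage k {M \<in> A. q \<notin># M})"
    by (rule card_Un_le)
  finally show ?thesis using card_image_le[OF assms(2), of "add_mset q"] by linarith
qed

lemma card_shadow_preimage_stable_split:
  assumes st: "strongly_stable q A" and fin: "finite A" and k: "1 \<le> k"
    and sz: "\<forall>M\<in>A. size M = k"
  shows "card (shadow_preimage k A) = card A + card (shadow_preimage k {M \<in> A. q \<notin># M})"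
proof -
  let ?A0 = "{M \<in> A. q \<notin># M}"
  have "add_mset q ` A \<subseteq> shadow_preimage k A"
  proof (rule image_subsetI)
    fix M assume M: "M \<in> A"
    have "add_mset q M - {#z#} \<in> A" if "z \<in># add_mset q M" for z
      using that M strongly_stable_move_bottom[OF st M, of z] by auto
    then show "add_mset q M \<in> shadow_preimage k A"
      using M sz by (simp add: shadow_preimage_def)
  qed
  moreover have "shadow_preimage k ?A0 \<subseteq> shadow_preimage k A"
    by (rule shadow_preimage_mono) auto
  ultimately have eq: "shadow_preimage k A = add_mset q ` A \<union> shadow_preimage k ?A0"
    by (intro subset_antisym[OF shadow_preimage_subset_bottom] Un_least)
  have "q \<notin># N" if "N \<in> shadow_preimage k ?A0" for N
    using shadow_preimage_elem[OF k that] by auto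
  then have "add_mset q ` A \<inter> shadow_preimage k ?A0 = {}" by (fastforce simp: disjoint_iff)
  then show ?thesis
    unfolding eq using fin finite_shadow_preimage[OF k, of ?A0]
    by (subst card_Un_disjoint) (auto simp: card_image inj_on_def)
qed

lemma macaulay_fun_bottom_bound:
  assumes k: "1 \<le> k" and y: "card {N. add_mset q N \<in> colex_seg q k x} \<le> y"
  shows "x + macaulay_fun k (x - y) \<le> macaulay_fun k x"
proof -
  let ?C = "colex_seg q k x"
  obtain c where c: "{M \<in> ?C. q \<notin># M} = colex_seg (Suc q) k c"
    using colex_seg_avoiding_bottom[of q k x] by blast
  have card_C: "card ?C = x" using card_colex_seg k by simp
  have "macaulay_fun k x = card (shadow_preimage k ?C)"
    using card_shadow_preimage_colex_seg[OF k] by simp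
  also have "\<dots> = card ?C + card (shadow_preimage k {M \<in> ?C. q \<notin># M})"
    by (rule card_shadow_preimage_stable_split[OF strongly_stable_colex_seg finite_colex_seg k])
      (simp add: size_colex_seg)
  also have "\<dots> = x + macaulay_fun k c"
    using c card_C card_shadow_preimage_colex_seg[OF k] by simp
  finally have mf: "macaulay_fun k x = x + macaulay_fun k c" .
  have "card {M \<in> ?C. q \<notin># M} = c" using c card_colex_seg k by simp
  then have "x - y \<le> c"
    using card_split_add_mset[OF finite_colex_seg, of q k x q] card_C y by simp
  then show ?thesis using mf macaulay_fun_mono[OF k] by simp
qed

lemma card_bottom_colex_seg_le:
  assumes j: "1 \<le> j" and x: "x \<le> macaulay_fun j y"
  shows "card {N. add_mset 0 N \<in> colex_seg 0 (Suc j) x} \<le> y"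
proof -
  have "colex_seg 0 (Suc j) x \<subseteq> shadow_preimage j (colex_seg 0 j y)"
    using colex_seg_mono[OF x] shadow_preimage_colex_seg[of j y 0] j by simp
  then have "{N. add_mset 0 N \<in> colex_seg 0 (Suc j) x} \<subseteq> colex_seg 0 j y"
    by (auto simp: shadow_preimage_def)
  then have "card {N. add_mset 0 N \<in> colex_seg 0 (Suc j) x} \<le> card (colex_seg 0 j y)"
    by (rule card_mono[OF finite_colex_seg])
  then show ?thesis using card_colex_seg j by simp
qed

lemma card_bottom_colex_seg_le_one: "card {N. add_mset 0 N \<in> colex_seg 0 1 x} \<le> 1"
proof -
  have "N = {#}" if "add_mset 0 N \<in> colex_seg 0 1 x" for N
    using size_colex_seg[OF that] by simp
  then have "{N. add_mset 0 N \<in> colex_seg 0 1 x} \<subseteq> {{#}}" by blast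
  then show ?thesis using card_mono[of "{{#}}" "{N. add_mset 0 N \<in> colex_seg 0 1 x}"] by simp
qed

text \<open>Macaulay's bound for strongly stable families, by induction on \<open>k\<close> and on \<open>card A\<close>:
  the multisets containing the bottom value \<open>p\<close> form a strongly stable family \<open>A1\<close> of smaller
  size whose preimage contains \<open>A\<close>, and the others a strongly stable family over \<open>{Suc p..}\<close>.\<close>

theorem card_shadow_preimage_stable:
  assumes "1 \<le> k" "finite A" "\<forall>M\<in>A. size M = k" "strongly_stable p A"
  shows "card (shadow_preimage k A) \<le> macaulay_fun k (card A)"
  using assms
proof (induction k arbitrary: p A rule: less_induct)
  case (less k)
  note smaller_k = less.IH
  from less.prems show ?case
  proof (induction "card A" arbitrary: p A rule: less_induct)
    case less
    note k = less.prems(1) and fin = less.prems(2) and sz = less.prems(3) and st = less.prems(4)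
    define A1 where "A1 = {N. add_mset p N \<in> A}"
    define A0 where "A0 = {M \<in> A. p \<notin># M}"
    have split: "card A = card A1 + card A0"
      using card_split_add_mset[OF fin] by (simp add: A1_def A0_def)
    show ?case
    proof (cases "A = {}")
      case False
      then obtain M where M: "M \<in> A" by blast
      then have "M \<noteq> {#}" using sz k by auto
      then obtain z where "z \<in># M" by (meson multiset_nonemptyE)
      then have "M - {#z#} \<in> A1"
        using strongly_stable_move_bottom[OF st M] by (simp add: A1_def)
      moreover have "finite A1"
        using fin by (rule finite_subset[rotated, THEN finite_imageD]) (auto simp: A1_def inj_on_def)
      ultimately have A1: "1 \<le> card A1" by (auto simp: Suc_le_eq card_gt_0_iff)
      have IH0: "card (shadow_preimage k A0) \<le> macaulay_fun k (card A0)"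
        using less.hyps[of A0 "Suc p"] split A1 k fin sz strongly_stable_avoiding[OF st]
        by (simp add: A0_def)
      have "card (shadow_preimage k A) \<le> card A + card (shadow_preimage k A0)"
        using card_shadow_preimage_le_bottom[OF k fin] by (simp add: A0_def)
      also have "\<dots> \<le> card A + macaulay_fun k (card A - card A1)"
        using IH0 split by simp
      finally have bound: "card (shadow_preimage k A) \<le> card A + macaulay_fun k (card A - card A1)" .
      have "card {N. add_mset 0 N \<in> colex_seg 0 k (card A)} \<le> card A1"
      proof (cases "k = 1")
        case True
        then show ?thesis using card_bottom_colex_seg_le_one A1 by (metis le_trans)
      next
        case False
        then obtain j where j: "k = Suc j" "1 \<le> j" using k by (cases k) auto
        have "\<forall>N\<in>A1. size N = j" using sz j unfolding A1_def by force
        then have "card (shadow_preimage j A1) \<le> macaulay_fun j (card A1)"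
          using smaller_k[of j A1 p] j \<open>finite A1\<close> strongly_stable_link[OF st]
          by (simp add: A1_def)
        moreover have "card A \<le> card (shadow_preimage j A1)"
          using subset_shadow_preimage_link[OF st] sz j finite_shadow_preimage[OF j(2) \<open>finite A1\<close>]
          by (intro card_mono) (auto simp: A1_def)
        ultimately show ?thesis using card_bottom_colex_seg_le[OF j(2)] j(1) by simp
      qed
      then show ?thesis using bound macaulay_fun_bottom_bound[OF k] by (meson le_trans)
    qed simp
  qed
qed

section \<open>Compression\<close>

lemma sum_final_segment_le:
  fixes g :: "nat \<Rightarrow> nat"
  assumes A: "A \<subseteq> {0..c}" and dec: "\<And>a b. a < b \<Longrightarrow> b \<le> c \<Longrightarrow> g b < g a"
  shows "sum g {a. a \<le> c \<and> c < a + card A} \<le> sum g A \<and>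
         (A \<noteq> {a. a \<le> c \<and> c < a + card A} \<longrightarrow> sum g {a. a \<le> c \<and> c < a + card A} < sum g A)"
proof -
  define T where "T = {a. a \<le> c \<and> c < a + card A}"
  have finA: "finite A" using finite_subset[OF A] by blast
  have finT: "finite T" by (simp add: T_def)
  have cA: "card A \<le> Suc c" using card_mono[OF _ A] by simp
  have cT: "card T = card A"
  proof -
    have "T = {Suc c - card A..c}" using cA by (auto simp: T_def)
    then show ?thesis using cA by simp
  qed
  have cD: "card (A - T) = card (T - A)"
    using card_Diff_subset_Int[of "A \<inter> T" A] card_Diff_subset_Int[of "A \<inter> T" T] finA finT cT
    by (simp add: Diff_Int2 Int_commute card_Diff_subset_Int)
  have sA: "sum g A = sum g (A \<inter> T) + sum g (A - T)" by (rule sum.Int_Diff[OF finA])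
  have sT: "sum g T = sum g (T \<inter> A) + sum g (T - A)" by (rule sum.Int_Diff[OF finT])
  show ?thesis
  proof (cases "A - T = {}")
    case True
    then have "card (T - A) = 0" using cD by (simp only: card.empty)
    then have "T - A = {}" using finT by simp
    then have "A = T" using True by blast
    then show ?thesis by (simp add: T_def)
  next
    case False
    define L where "L = c - card A"
    obtain a0 where a0: "a0 \<in> A - T" using False by blast
    have a0c: "a0 + card A \<le> c" using a0 A by (auto simp: T_def)
    have D1: "a \<le> L" if "a \<in> A - T" for a using that A by (auto simp: T_def L_def)
    have D2: "Suc L \<le> b \<and> b \<le> c" if "b \<in> T - A" for b using that a0c by (auto simp: T_def L_def)
    have cA1: "0 < card A" using a0 finA by (auto simp: card_gt_0_iff)
    have Lc: "Suc L \<le> c" using a0c cA1 by (simp add: L_def)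
    have g1: "g L \<le> g a" if "a \<in> A - T" for a
      using D1[OF that] dec[of a L] Lc by (cases "a = L") auto
    have g2: "g b \<le> g (Suc L)" if "b \<in> T - A" for b
      using D2[OF that] dec[of "Suc L" b] by (cases "b = Suc L") auto
    have g3: "g (Suc L) < g L" using dec[of L "Suc L"] Lc by simp
    have r: "card (A - T) > 0" using False finA by (simp add: card_gt_0_iff)
    have "sum g (T - A) \<le> card (T - A) * g (Suc L)"
      using sum_bounded_above[of "T - A" g "g (Suc L)"] g2 by simp
    also have "\<dots> < card (A - T) * g L" using cD r g3 by simp
    also have "\<dots> \<le> sum g (A - T)"
      using sum_bounded_below[of "A - T" "g L" g] g1 by simp
    finally have "sum g (T - A) < sum g (A - T)" .
    then have "sum g T < sum g A" using sA sT by (simp add: Int_commute)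
    then show ?thesis by (simp add: T_def)
  qed
qed

lemma card_final_segment: "t \<le> Suc c \<Longrightarrow> card {a::nat. a \<le> c \<and> c < a + t} = t"
proof -
  assume t: "t \<le> Suc c"
  have "{a::nat. a \<le> c \<and> c < a + t} = {Suc c - t..c}" using t by auto
  then show ?thesis using t by simp
qed

lemma card_interval_shadow_ge:
  fixes A :: "nat set"
  assumes "A \<subseteq> {0..Suc c}"
  shows "min (card A) (Suc c) \<le> card ({a \<in> A. a \<le> c} \<union> (\<lambda>a. a - 1) ` {a \<in> A. 1 \<le> a})"
proof -
  let ?E = "{a \<in> A. a \<le> c} \<union> (\<lambda>a. a - 1) ` {a \<in> A. 1 \<le> a}"
  have finA: "finite A" using finite_subset[OF assms] by blast
  have finE: "finite ?E" using finA by auto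
  show ?thesis
  proof (cases "{0..Suc c} \<subseteq> A")
    case True
    then have "{0..c} \<subseteq> ?E" by auto
    then have "card {0..c} \<le> card ?E" by (rule card_mono[OF finE])
    then show ?thesis by simp
  next
    case False
    then obtain g where g0: "g \<in> {0..Suc c}" "g \<notin> A" by blast
    then have g: "g \<le> Suc c" "g \<notin> A" by auto
    define \<phi> where "\<phi> a = (if a < g then a else a - 1)" for a :: nat
    have inj: "inj_on \<phi> A"
      unfolding inj_on_def
    proof (intro ballI impI)
      fix a a' assume a: "a \<in> A" "a' \<in> A" "\<phi> a = \<phi> a'"
      have "a \<noteq> g" "a' \<noteq> g" using a g(2) by auto
      then show "a = a'" using a(3) unfolding \<phi>_def by (auto split: if_splits)
    qed
    have "\<phi> ` A \<subseteq> ?E"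
    proof
      fix b assume "b \<in> \<phi> ` A"
      then obtain a where a: "a \<in> A" "b = \<phi> a" by auto
      show "b \<in> ?E"
      proof (cases "a < g")
        case True then have "a \<le> c" using g(1) by simp
        then show ?thesis using a True by (simp add: \<phi>_def)
      next
        case False then have "g < a" using a g(2) by (cases "a = g") auto
        then have "b = a - 1" "1 \<le> a" using a False by (auto simp: \<phi>_def)
        then show ?thesis using a(1) by blast
      qed
    qed
    then have "card (\<phi> ` A) \<le> card ?E" by (rule card_mono[OF finE])
    then show ?thesis using card_image[OF inj] by simp
  qed
qed

text \<open>A multiset \<open>M\<close> is determined by its part \<open>R\<close> outside \<open>{i, j}\<close>, the number \<open>c\<close> of its
  entries in \<open>{i, j}\<close> and the number \<open>a\<close> of entries equal to \<open>i\<close>: \<open>M = assemble i j R c a\<close>.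
  The \<open>(i, j)\<close>-compression of \<open>B\<close> replaces, for each key \<open>(R, c)\<close>, the set of occurring \<open>a\<close>
  by the final segment of \<open>{0..c}\<close> of the same size, i.e.\ it trades \<open>j\<close>'s for \<open>i\<close>'s.\<close>

definition rest_pair :: "nat \<Rightarrow> nat \<Rightarrow> nat multiset \<Rightarrow> nat multiset" where
  "rest_pair i j M = filter_mset (\<lambda>z. z \<noteq> i \<and> z \<noteq> j) M"

definition pair_count :: "nat \<Rightarrow> nat \<Rightarrow> nat multiset \<Rightarrow> nat" where
  "pair_count i j M = count M i + count M j"

definition assemble :: "nat \<Rightarrow> nat \<Rightarrow> nat multiset \<Rightarrow> nat \<Rightarrow> nat \<Rightarrow> nat multiset" where
  "assemble i j R c a = R + replicate_mset a i + replicate_mset (c - a) j"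

definition pair_key :: "nat \<Rightarrow> nat \<Rightarrow> nat multiset \<Rightarrow> nat multiset \<times> nat" where
  "pair_key i j M = (rest_pair i j M, pair_count i j M)"

definition pair_fiber :: "nat \<Rightarrow> nat \<Rightarrow> nat multiset set \<Rightarrow> nat multiset \<Rightarrow> nat \<Rightarrow> nat set" where
  "pair_fiber i j X R c = {a. a \<le> c \<and> assemble i j R c a \<in> X}"

definition compress :: "nat \<Rightarrow> nat \<Rightarrow> nat multiset set \<Rightarrow> nat multiset set" where
  "compress i j B = {N. \<exists>M\<in>B. pair_key i j N = pair_key i j M \<and>
      pair_count i j N < count N i + card (pair_fiber i j B (rest_pair i j N) (pair_count i j N))}"

definition avoids_pair :: "nat \<Rightarrow> nat \<Rightarrow> nat multiset \<Rightarrow> bool" where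
  "avoids_pair i j R \<longleftrightarrow> i \<notin># R \<and> j \<notin># R"

context
  fixes i j :: nat
  assumes ij: "i \<noteq> j"
begin

lemma assemble_decomp: "M = assemble i j (rest_pair i j M) (pair_count i j M) (count M i)"
  using ij by (auto simp: multiset_eq_iff assemble_def rest_pair_def pair_count_def)

lemma rest_pair_avoids: "avoids_pair i j (rest_pair i j M)"
  by (simp add: avoids_pair_def rest_pair_def)

lemma count_le_pair_count: "count M i \<le> pair_count i j M"
  by (simp add: pair_count_def)

lemma assemble_props:
  assumes "avoids_pair i j R" "a \<le> c"
  shows "rest_pair i j (assemble i j R c a) = R" "pair_count i j (assemble i j R c a) = c" "count (assemble i j R c a) i = a"
  using assms ij
  by (auto simp: multiset_eq_iff assemble_def rest_pair_def pair_count_def avoids_pair_def not_in_iff)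

lemma pair_key_assemble: "avoids_pair i j R \<Longrightarrow> a \<le> c \<Longrightarrow> pair_key i j (assemble i j R c a) = (R, c)"
  using assemble_props by (simp add: pair_key_def)

lemma assemble_inj:
  assumes "avoids_pair i j R" "a \<le> c" "avoids_pair i j R'" "a' \<le> c'" "assemble i j R c a = assemble i j R' c' a'"
  shows "R = R' \<and> c = c' \<and> a = a'"
  using assemble_props[OF assms(1,2)] assemble_props[OF assms(3,4)] assms(5) by metis

lemma set_assemble: "set_mset (assemble i j R c a) \<subseteq> set_mset R \<union> {i, j}"
  by (auto simp: assemble_def)

lemma set_rest_pair: "set_mset (rest_pair i j M) \<subseteq> set_mset M"
  by (auto simp: rest_pair_def)

lemma sum_assemble: "a \<le> c \<Longrightarrow> sum_mset (assemble i j R c a) = sum_mset R + a * i + (c - a) * j"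
  by (simp add: assemble_def sum_mset_replicate_mset)

lemma assemble_minus_j: "a < c \<Longrightarrow> assemble i j R c a - {#j#} = assemble i j R (c - 1) a"
  using ij by (auto simp: multiset_eq_iff assemble_def)

lemma assemble_minus_i: "1 \<le> a \<Longrightarrow> a \<le> c \<Longrightarrow> assemble i j R c a - {#i#} = assemble i j R (c - 1) (a - 1)"
  using ij by (auto simp: multiset_eq_iff assemble_def)

lemma assemble_minus_other: "z \<in># R \<Longrightarrow> assemble i j R c a - {#z#} = assemble i j (R - {#z#}) c a"
  by (auto simp: multiset_eq_iff assemble_def)

lemma assemble_Suc: "a < c \<Longrightarrow> assemble i j R c (Suc a) = add_mset i (assemble i j R c a - {#j#})"
  using ij by (auto simp: multiset_eq_iff assemble_def)

lemma pair_fiber_subset: "pair_fiber i j X R c \<subseteq> {0..c}"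
  by (auto simp: pair_fiber_def)

lemma finite_pair_fiber[simp]: "finite (pair_fiber i j X R c)"
  using finite_subset[OF pair_fiber_subset] by blast

lemma pair_key_fiber_eq:
  assumes "avoids_pair i j R"
  shows "{M \<in> X. pair_key i j M = (R, c)} = assemble i j R c ` pair_fiber i j X R c"
proof (intro set_eqI iffI)
  fix M assume M: "M \<in> {M \<in> X. pair_key i j M = (R, c)}"
  then have "rest_pair i j M = R" "pair_count i j M = c" by (auto simp: pair_key_def)
  then have "M = assemble i j R c (count M i)" using assemble_decomp[of M] by simp
  moreover have "count M i \<le> c" using count_le_pair_count[of M] \<open>pair_count i j M = c\<close> by simp
  ultimately show "M \<in> assemble i j R c ` pair_fiber i j X R c" using M by (auto simp: pair_fiber_def)
next
  fix M assume "M \<in> assemble i j R c ` pair_fiber i j X R c"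
  then obtain a where "a \<le> c" "assemble i j R c a \<in> X" "M = assemble i j R c a" by (auto simp: pair_fiber_def)
  then show "M \<in> {M \<in> X. pair_key i j M = (R, c)}" using pair_key_assemble[OF assms] by simp
qed

lemma inj_on_assemble: "avoids_pair i j R \<Longrightarrow> inj_on (assemble i j R c) (pair_fiber i j X R c)"
  unfolding inj_on_def pair_fiber_def using assemble_inj by blast

lemma sum_over_pair_fibers:
  fixes g :: "nat multiset \<Rightarrow> nat"
  assumes "finite X"
  shows "sum g X = (\<Sum>\<kappa>\<in>pair_key i j ` X. \<Sum>a\<in>pair_fiber i j X (fst \<kappa>) (snd \<kappa>). g (assemble i j (fst \<kappa>) (snd \<kappa>) a))"
proof -
  have "sum g X = (\<Sum>\<kappa>\<in>pair_key i j ` X. sum g {M \<in> X. pair_key i j M = \<kappa>})"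
    by (rule sum.image_gen[OF assms])
  also have "\<dots> = (\<Sum>\<kappa>\<in>pair_key i j ` X. \<Sum>a\<in>pair_fiber i j X (fst \<kappa>) (snd \<kappa>). g (assemble i j (fst \<kappa>) (snd \<kappa>) a))"
  proof (rule sum.cong[OF refl])
    fix \<kappa> assume "\<kappa> \<in> pair_key i j ` X"
    then obtain M where "M \<in> X" "\<kappa> = pair_key i j M" by blast
    then have nR: "avoids_pair i j (fst \<kappa>)" using rest_pair_avoids by (simp add: pair_key_def)
    have "{M \<in> X. pair_key i j M = \<kappa>} = assemble i j (fst \<kappa>) (snd \<kappa>) ` pair_fiber i j X (fst \<kappa>) (snd \<kappa>)"
      using pair_key_fiber_eq[OF nR, of X "snd \<kappa>"] by simp
    then show "sum g {M \<in> X. pair_key i j M = \<kappa>} = (\<Sum>a\<in>pair_fiber i j X (fst \<kappa>) (snd \<kappa>). g (assemble i j (fst \<kappa>) (snd \<kappa>) a))"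
      using sum.reindex[OF inj_on_assemble[OF nR]] by (simp add: o_def)
  qed
  finally show ?thesis .
qed

lemma card_over_pair_fibers:
  assumes "finite X"
  shows "card X = (\<Sum>\<kappa>\<in>pair_key i j ` X. card (pair_fiber i j X (fst \<kappa>) (snd \<kappa>)))"
  using sum_over_pair_fibers[OF assms, of "\<lambda>_. 1"] by simp

lemma pair_fiber_compress:
  assumes "(R, c) \<in> pair_key i j ` B"
  shows "pair_fiber i j (compress i j B) R c = {a. a \<le> c \<and> c < a + card (pair_fiber i j B R c)}"
proof -
  obtain M where M: "M \<in> B" "pair_key i j M = (R, c)" using assms by auto
  have nR: "avoids_pair i j R" using M rest_pair_avoids by (auto simp: pair_key_def)
  show ?thesis
  proof (intro set_eqI iffI)
    fix a assume "a \<in> pair_fiber i j (compress i j B) R c"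
    then have a: "a \<le> c" "assemble i j R c a \<in> compress i j B" by (auto simp: pair_fiber_def)
    then show "a \<in> {a. a \<le> c \<and> c < a + card (pair_fiber i j B R c)}"
      using assemble_props[OF nR a(1)] by (auto simp: compress_def)
  next
    fix a assume a: "a \<in> {a. a \<le> c \<and> c < a + card (pair_fiber i j B R c)}"
    then have a1: "a \<le> c" "c < a + card (pair_fiber i j B R c)" by auto
    have "pair_key i j (assemble i j R c a) = pair_key i j M" using pair_key_assemble[OF nR a1(1)] M(2) by simp
    moreover have "pair_count i j (assemble i j R c a) < count (assemble i j R c a) i +
        card (pair_fiber i j B (rest_pair i j (assemble i j R c a)) (pair_count i j (assemble i j R c a)))"
      using assemble_props[OF nR a1(1)] a1(2) by simp
    ultimately have "assemble i j R c a \<in> compress i j B" using M(1) unfolding compress_def by blast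
    then show "a \<in> pair_fiber i j (compress i j B) R c" using a by (auto simp: pair_fiber_def)
  qed
qed

lemma count_in_pair_fiber:
  assumes "M \<in> X" shows "count M i \<in> pair_fiber i j X (rest_pair i j M) (pair_count i j M)"
  using assms assemble_decomp[of M] count_le_pair_count[of M] by (auto simp: pair_fiber_def)

lemma pair_key_compress: "pair_key i j ` compress i j B = pair_key i j ` B"
proof (intro set_eqI iffI)
  fix \<kappa> assume "\<kappa> \<in> pair_key i j ` compress i j B"
  then show "\<kappa> \<in> pair_key i j ` B" by (auto simp: compress_def)
next
  fix \<kappa> assume k: "\<kappa> \<in> pair_key i j ` B"
  then obtain M where M: "M \<in> B" "\<kappa> = pair_key i j M" by blast
  define R c where "R = rest_pair i j M" and "c = pair_count i j M"
  have nR: "avoids_pair i j R" by (simp add: R_def rest_pair_avoids)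
  have "count M i \<in> pair_fiber i j B R c" using count_in_pair_fiber[OF M(1)] by (simp add: R_def c_def)
  then have "card (pair_fiber i j B R c) \<ge> 1" using finite_pair_fiber
    by (metis One_nat_def Suc_leI card_gt_0_iff empty_iff)
  then have "c \<in> pair_fiber i j (compress i j B) R c"
    using pair_fiber_compress[of R c B] k M by (auto simp: R_def c_def pair_key_def)
  then have "assemble i j R c c \<in> compress i j B" by (simp add: pair_fiber_def)
  moreover have "pair_key i j (assemble i j R c c) = \<kappa>" using pair_key_assemble[OF nR] M by (simp add: R_def c_def pair_key_def)
  ultimately show "\<kappa> \<in> pair_key i j ` compress i j B" by (metis imageI)
qed

lemma card_pair_fiber_le: "card (pair_fiber i j X R c) \<le> Suc c"
  using card_mono[OF _ pair_fiber_subset] by fastforce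

lemma finite_compress:
  assumes "finite B" shows "finite (compress i j B)"
proof -
  have "compress i j B \<subseteq> (\<Union>\<kappa>\<in>pair_key i j ` B. assemble i j (fst \<kappa>) (snd \<kappa>) ` {0..snd \<kappa>})"
  proof
    fix N assume "N \<in> compress i j B"
    then obtain M where M: "M \<in> B" "pair_key i j N = pair_key i j M" by (auto simp: compress_def)
    have "N = assemble i j (rest_pair i j N) (pair_count i j N) (count N i)" by (rule assemble_decomp)
    moreover have "count N i \<le> pair_count i j N" by (rule count_le_pair_count)
    ultimately have "N \<in> assemble i j (rest_pair i j M) (pair_count i j M) ` {0..pair_count i j M}"
      using M by (auto simp: pair_key_def)
    then show "N \<in> (\<Union>\<kappa>\<in>pair_key i j ` B. assemble i j (fst \<kappa>) (snd \<kappa>) ` {0..snd \<kappa>})"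
      using M(1) by (auto simp: pair_key_def)
  qed
  moreover have "finite (\<Union>\<kappa>\<in>pair_key i j ` B. assemble i j (fst \<kappa>) (snd \<kappa>) ` {0..snd \<kappa>})"
    using assms by auto
  ultimately show ?thesis by (rule finite_subset)
qed

lemma card_compress:
  assumes "finite B" shows "card (compress i j B) = card B"
proof -
  have "card (compress i j B) = (\<Sum>\<kappa>\<in>pair_key i j ` B. card (pair_fiber i j (compress i j B) (fst \<kappa>) (snd \<kappa>)))"
    using card_over_pair_fibers[OF finite_compress[OF assms]] pair_key_compress by simp
  also have "\<dots> = (\<Sum>\<kappa>\<in>pair_key i j ` B. card (pair_fiber i j B (fst \<kappa>) (snd \<kappa>)))"
  proof (rule sum.cong[OF refl])
    fix \<kappa> assume k: "\<kappa> \<in> pair_key i j ` B"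
    then show "card (pair_fiber i j (compress i j B) (fst \<kappa>) (snd \<kappa>)) = card (pair_fiber i j B (fst \<kappa>) (snd \<kappa>))"
      using pair_fiber_compress[of "fst \<kappa>" "snd \<kappa>" B] card_final_segment card_pair_fiber_le by simp
  qed
  also have "\<dots> = card B" using card_over_pair_fibers[OF assms] by simp
  finally show ?thesis .
qed

lemma size_rest_pair: "size M = size (rest_pair i j M) + pair_count i j M"
  by (subst assemble_decomp[of M]) (simp add: assemble_def pair_count_def)

lemma compress_subset:
  assumes "B \<subseteq> multisets_of_size {0..<n} k" "i < n" "j < n"
  shows "compress i j B \<subseteq> multisets_of_size {0..<n} k"
proof
  fix N assume "N \<in> compress i j B"
  then obtain M where M: "M \<in> B" "pair_key i j N = pair_key i j M" by (auto simp: compress_def)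
  have "size N = size M" using size_rest_pair[of N] size_rest_pair[of M] M(2) by (simp add: pair_key_def)
  moreover have "set_mset N \<subseteq> set_mset M \<union> {i, j}"
  proof -
    have "set_mset N \<subseteq> set_mset (rest_pair i j N) \<union> {i, j}"
      using set_assemble[of "rest_pair i j N" "pair_count i j N" "count N i"] assemble_decomp[of N] by simp
    also have "\<dots> \<subseteq> set_mset M \<union> {i, j}" using M(2) set_rest_pair[of M] by (auto simp: pair_key_def)
    finally show ?thesis .
  qed
  moreover have "M \<in> multisets_of_size {0..<n} k" using M(1) assms(1) by blast
  ultimately show "N \<in> multisets_of_size {0..<n} k" using assms(2,3)
    by (auto simp: multisets_of_size_def)
qed

lemma pair_fiber_shadow_subset:
  "{a \<in> pair_fiber i j B R (Suc c). a \<le> c} \<union> (\<lambda>a. a - 1) ` {a \<in> pair_fiber i j B R (Suc c). 1 \<le> a}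
         \<subseteq> pair_fiber i j (shadow B) R c"
proof
  fix b assume "b \<in> {a \<in> pair_fiber i j B R (Suc c). a \<le> c} \<union> (\<lambda>a. a - 1) ` {a \<in> pair_fiber i j B R (Suc c). 1 \<le> a}"
  then consider "b \<in> pair_fiber i j B R (Suc c)" "b \<le> c"
    | a where "a \<in> pair_fiber i j B R (Suc c)" "1 \<le> a" "b = a - 1" by blast
  then show "b \<in> pair_fiber i j (shadow B) R c"
  proof cases
    case 1
    then have inB: "assemble i j R (Suc c) b \<in> B" by (simp add: pair_fiber_def)
    have "j \<in># assemble i j R (Suc c) b" using 1 by (simp add: assemble_def)
    then have "assemble i j R (Suc c) b - {#j#} \<in> shadow B" using in_shadowI[OF inB] by blast
    moreover have "assemble i j R (Suc c) b - {#j#} = assemble i j R c b" using assemble_minus_j[of b "Suc c" R] 1 by simp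
    ultimately show ?thesis using 1 by (simp add: pair_fiber_def)
  next
    case 2
    then have inB: "assemble i j R (Suc c) a \<in> B" and ac: "a \<le> Suc c" by (auto simp: pair_fiber_def)
    have "i \<in># assemble i j R (Suc c) a" using 2 by (simp add: assemble_def)
    then have "assemble i j R (Suc c) a - {#i#} \<in> shadow B" using in_shadowI[OF inB] by blast
    moreover have "assemble i j R (Suc c) a - {#i#} = assemble i j R c (a - 1)"
      using assemble_minus_i[of a "Suc c" R] 2 ac by simp
    ultimately show ?thesis using 2 ac by (simp add: pair_fiber_def)
  qed
qed

lemma card_pair_fiber_shadow_ge:
  "min (card (pair_fiber i j B R (Suc c))) (Suc c) \<le> card (pair_fiber i j (shadow B) R c)"
  using card_interval_shadow_ge[OF pair_fiber_subset, of B R c]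
    card_mono[OF finite_pair_fiber pair_fiber_shadow_subset] by (rule le_trans)

lemma assemble_diff_singleton_cases:
  assumes R: "avoids_pair i j R" and ac: "a \<le> c" and R': "avoids_pair i j R'" and ac': "a' \<le> c'"
    and z: "z \<in># assemble i j R c a" and eq: "assemble i j R c a - {#z#} = assemble i j R' c' a'"
  shows "R' = R \<and> c = Suc c' \<and> a \<le> Suc a' \<or> z \<in># R \<and> R' = R - {#z#} \<and> c' = c \<and> a' = a"
proof -
  consider "z = i" | "z = j" | "z \<in># R"
    using z by (auto simp: assemble_def split: if_splits)
  then show ?thesis
  proof cases
    case 1
    then have a: "1 \<le> a" using z R ij by (auto simp: assemble_def avoids_pair_def split: if_splits)
    have "R = R' \<and> c - 1 = c' \<and> a - 1 = a'"
      by (rule assemble_inj[OF R _ R' ac']) (use eq 1 assemble_minus_i[OF a ac] ac in simp_all)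
    then show ?thesis using a ac by auto
  next
    case 2
    then have a: "a < c" using z R ij by (auto simp: assemble_def avoids_pair_def split: if_splits)
    have "R = R' \<and> c - 1 = c' \<and> a = a'"
      by (rule assemble_inj[OF R _ R' ac']) (use eq 2 assemble_minus_j[OF a] a in simp_all)
    then show ?thesis using a by auto
  next
    case 3
    have "avoids_pair i j (R - {#z#})" using R by (auto simp: avoids_pair_def dest: in_diffD)
    then have "R - {#z#} = R' \<and> c = c' \<and> a = a'"
      by (rule assemble_inj[OF _ ac R' ac']) (use eq 3 assemble_minus_other in simp)
    then show ?thesis using 3 by auto
  qed
qed

text \<open>A fibre of the compressed shadow is an interval ending at \<open>c'\<close>; its length is bounded by
  the fibre of \<open>B\<close> it comes from, whose shadow lies in the corresponding fibre of \<open>shadow B\<close>.\<close>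

lemma card_pair_fiber_shadow_compress:
  assumes N0: "N0 \<in> shadow (compress i j B)"
  defines "R' \<equiv> rest_pair i j N0" and "c' \<equiv> pair_count i j N0"
  shows "card (pair_fiber i j (shadow (compress i j B)) R' c') \<le> card (pair_fiber i j (shadow B) R' c')"
proof -
  let ?F' = "pair_fiber i j (shadow (compress i j B)) R' c'"
  let ?F = "pair_fiber i j (shadow B) R' c'"
  have R': "avoids_pair i j R'" by (simp add: R'_def rest_pair_avoids)
  have "?F' \<noteq> {}" using count_in_pair_fiber[OF N0] by (auto simp: R'_def c'_def)
  define a' where "a' = Min ?F'"
  have "a' \<in> ?F'" using \<open>?F' \<noteq> {}\<close> by (simp add: a'_def)
  then have a'c': "a' \<le> c'" and "assemble i j R' c' a' \<in> shadow (compress i j B)"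
    by (auto simp: pair_fiber_def)
  then obtain N z where N: "N \<in> compress i j B" and z: "z \<in># N"
    and Nz: "N - {#z#} = assemble i j R' c' a'"
    unfolding shadow_def by auto
  have "?F' \<subseteq> {a'..c'}" using Min_le[OF finite_pair_fiber] by (auto simp: a'_def pair_fiber_def)
  then have card_F': "card ?F' \<le> Suc c' - a'" using card_mono[of "{a'..c'}" ?F'] by simp
  define R c a where "R = rest_pair i j N" and "c = pair_count i j N" and "a = count N i"
  have R: "avoids_pair i j R" by (simp add: R_def rest_pair_avoids)
  have N_eq: "N = assemble i j R c a" using assemble_decomp[of N] by (simp add: R_def c_def a_def)
  have ac: "a \<le> c" using count_le_pair_count[of N] by (simp add: a_def c_def)
  define t where "t = card (pair_fiber i j B R c)"
  have ct: "c < a + t" using N by (auto simp: compress_def R_def c_def a_def t_def)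
  have "R' = R \<and> c = Suc c' \<and> a \<le> Suc a' \<or> z \<in># R \<and> R' = R - {#z#} \<and> c' = c \<and> a' = a"
    by (rule assemble_diff_singleton_cases[OF R ac R' a'c']) (use z Nz N_eq in simp_all)
  then have "Suc c' - a' \<le> card ?F"
  proof (elim disjE conjE)
    assume "R' = R" "c = Suc c'" "a \<le> Suc a'"
    then show ?thesis
      using card_pair_fiber_shadow_ge[of B R c'] ct by (simp add: t_def)
  next
    assume zR: "z \<in># R" and "R' = R - {#z#}" "c' = c" "a' = a"
    have "pair_fiber i j B R c \<subseteq> ?F"
    proof
      fix b assume "b \<in> pair_fiber i j B R c"
      then have "assemble i j R c b \<in> B" "b \<le> c" by (auto simp: pair_fiber_def)
      moreover have "z \<in># assemble i j R c b" using zR by (simp add: assemble_def)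
      ultimately show "b \<in> ?F"
        using in_shadowI[of "assemble i j R c b" B z] assemble_minus_other[OF zR]
          \<open>R' = R - {#z#}\<close> \<open>c' = c\<close> by (simp add: pair_fiber_def)
    qed
    then have "t \<le> card ?F" by (simp add: t_def card_mono)
    then show ?thesis using ct \<open>c' = c\<close> \<open>a' = a\<close> by simp
  qed
  then show ?thesis using card_F' by simp
qed

lemma card_shadow_compress:
  assumes fin: "finite B"
  shows "card (shadow (compress i j B)) \<le> card (shadow B)"
proof -
  let ?S' = "shadow (compress i j B)" and ?S = "shadow B"
  have finS': "finite ?S'" by (rule finite_shadow[OF finite_compress[OF fin]])
  have finS: "finite ?S" by (rule finite_shadow[OF fin])
  have le: "card (pair_fiber i j ?S' (fst \<kappa>) (snd \<kappa>)) \<le> card (pair_fiber i j ?S (fst \<kappa>) (snd \<kappa>))"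
    if "\<kappa> \<in> pair_key i j ` ?S'" for \<kappa>
    using that card_pair_fiber_shadow_compress by (auto simp: pair_key_def)
  have sub: "pair_key i j ` ?S' \<subseteq> pair_key i j ` ?S"
  proof
    fix \<kappa> assume k: "\<kappa> \<in> pair_key i j ` ?S'"
    then obtain N0 where N0: "N0 \<in> ?S'" "\<kappa> = pair_key i j N0" by blast
    have nR: "avoids_pair i j (fst \<kappa>)" using N0 rest_pair_avoids by (simp add: pair_key_def)
    have "count N0 i \<in> pair_fiber i j ?S' (fst \<kappa>) (snd \<kappa>)" using count_in_pair_fiber[OF N0(1)] N0(2)
      by (simp add: pair_key_def)
    then have "card (pair_fiber i j ?S' (fst \<kappa>) (snd \<kappa>)) > 0" using finite_pair_fiber card_gt_0_iff by blast
    then have "card (pair_fiber i j ?S (fst \<kappa>) (snd \<kappa>)) > 0" using le[OF k] by simp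
    then obtain a where "a \<in> pair_fiber i j ?S (fst \<kappa>) (snd \<kappa>)" by (metis card_gt_0_iff ex_in_conv)
    then have "assemble i j (fst \<kappa>) (snd \<kappa>) a \<in> ?S" "a \<le> snd \<kappa>" by (auto simp: pair_fiber_def)
    moreover have "pair_key i j (assemble i j (fst \<kappa>) (snd \<kappa>) a) = \<kappa>" using pair_key_assemble[OF nR \<open>a \<le> snd \<kappa>\<close>] by simp
    ultimately show "\<kappa> \<in> pair_key i j ` ?S" by (metis imageI)
  qed
  have "card ?S' = (\<Sum>\<kappa>\<in>pair_key i j ` ?S'. card (pair_fiber i j ?S' (fst \<kappa>) (snd \<kappa>)))"
    by (rule card_over_pair_fibers[OF finS'])
  also have "\<dots> \<le> (\<Sum>\<kappa>\<in>pair_key i j ` ?S'. card (pair_fiber i j ?S (fst \<kappa>) (snd \<kappa>)))"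
    by (rule sum_mono) (rule le)
  also have "\<dots> \<le> (\<Sum>\<kappa>\<in>pair_key i j ` ?S. card (pair_fiber i j ?S (fst \<kappa>) (snd \<kappa>)))"
    by (rule sum_mono2) (use finS sub in auto)
  also have "\<dots> = card ?S" by (rule card_over_pair_fibers[OF finS, symmetric])
  finally show ?thesis .
qed

lemma sum_assemble_strict_antimono:
  assumes "i < j" "a < b" "b \<le> c"
  shows "sum_mset (assemble i j R c b) < sum_mset (assemble i j R c a)"
proof -
  obtain d where d: "b = a + d" "0 < d" using assms(2) by (metis less_imp_add_positive)
  have "c - a = (c - b) + d" using assms d by simp
  moreover have "d * i < d * j" using d(2) assms(1) by simp
  ultimately have "b * i + (c - b) * j < a * i + (c - a) * j"
    unfolding d(1) by (simp add: algebra_simps)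
  then show ?thesis using assms by (simp add: sum_assemble)
qed

lemma sum_pair_fiber_compress:
  assumes "i < j" "(R, c) \<in> pair_key i j ` B"
  shows "(\<Sum>a\<in>pair_fiber i j (compress i j B) R c. sum_mset (assemble i j R c a))
           \<le> (\<Sum>a\<in>pair_fiber i j B R c. sum_mset (assemble i j R c a))"
    and "pair_fiber i j B R c \<noteq> pair_fiber i j (compress i j B) R c \<Longrightarrow>
         (\<Sum>a\<in>pair_fiber i j (compress i j B) R c. sum_mset (assemble i j R c a))
           < (\<Sum>a\<in>pair_fiber i j B R c. sum_mset (assemble i j R c a))"
  using sum_final_segment_le[of "pair_fiber i j B R c" c "\<lambda>a. sum_mset (assemble i j R c a)"]
    pair_fiber_subset sum_assemble_strict_antimono[OF assms(1)] pair_fiber_compress[OF assms(2)] by auto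

lemma weight_compress_less:
  assumes fin: "finite B" and lt: "i < j"
    and M0: "M0 \<in> B" and jM0: "j \<in># M0" and nB: "add_mset i (M0 - {#j#}) \<notin> B"
  shows "(\<Sum>M\<in>compress i j B. sum_mset M) < (\<Sum>M\<in>B. sum_mset M)"
proof -
  define G where "G \<kappa> a = sum_mset (assemble i j (fst \<kappa>) (snd \<kappa>) a)" for \<kappa> a
  have S1: "(\<Sum>M\<in>compress i j B. sum_mset M) = (\<Sum>\<kappa>\<in>pair_key i j ` B. \<Sum>a\<in>pair_fiber i j (compress i j B) (fst \<kappa>) (snd \<kappa>). G \<kappa> a)"
    using sum_over_pair_fibers[OF finite_compress[OF fin], of sum_mset] pair_key_compress by (simp add: G_def)
  have S2: "(\<Sum>M\<in>B. sum_mset M) = (\<Sum>\<kappa>\<in>pair_key i j ` B. \<Sum>a\<in>pair_fiber i j B (fst \<kappa>) (snd \<kappa>). G \<kappa> a)"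
    using sum_over_pair_fibers[OF fin, of sum_mset] by (simp add: G_def)
  have each: "(\<Sum>a\<in>pair_fiber i j (compress i j B) (fst \<kappa>) (snd \<kappa>). G \<kappa> a) \<le> (\<Sum>a\<in>pair_fiber i j B (fst \<kappa>) (snd \<kappa>). G \<kappa> a)"
    "pair_fiber i j B (fst \<kappa>) (snd \<kappa>) \<noteq> pair_fiber i j (compress i j B) (fst \<kappa>) (snd \<kappa>) \<Longrightarrow>
       (\<Sum>a\<in>pair_fiber i j (compress i j B) (fst \<kappa>) (snd \<kappa>). G \<kappa> a) < (\<Sum>a\<in>pair_fiber i j B (fst \<kappa>) (snd \<kappa>). G \<kappa> a)"
    if "\<kappa> \<in> pair_key i j ` B" for \<kappa>
    using sum_pair_fiber_compress[OF lt, of "fst \<kappa>" "snd \<kappa>" B] that by (simp_all add: G_def)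
  define \<kappa>0 where "\<kappa>0 = pair_key i j M0"
  have k0: "\<kappa>0 \<in> pair_key i j ` B" using M0 by (simp add: \<kappa>0_def)
  define a0 where "a0 = count M0 i"
  have M0eq: "M0 = assemble i j (fst \<kappa>0) (snd \<kappa>0) a0"
    using assemble_decomp[of M0] by (simp add: \<kappa>0_def pair_key_def a0_def)
  have a0c: "a0 < snd \<kappa>0" using jM0 ij by (simp add: \<kappa>0_def pair_key_def a0_def pair_count_def)
  have a0in: "a0 \<in> pair_fiber i j B (fst \<kappa>0) (snd \<kappa>0)" using M0 M0eq a0c by (auto simp: pair_fiber_def)
  have "assemble i j (fst \<kappa>0) (snd \<kappa>0) (Suc a0) = add_mset i (M0 - {#j#})"
    using assemble_Suc[OF a0c] M0eq by simp
  then have a1n: "Suc a0 \<notin> pair_fiber i j B (fst \<kappa>0) (snd \<kappa>0)" using nB by (simp add: pair_fiber_def)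
  have differs: "pair_fiber i j B (fst \<kappa>0) (snd \<kappa>0) \<noteq> pair_fiber i j (compress i j B) (fst \<kappa>0) (snd \<kappa>0)"
  proof
    assume eq: "pair_fiber i j B (fst \<kappa>0) (snd \<kappa>0) = pair_fiber i j (compress i j B) (fst \<kappa>0) (snd \<kappa>0)"
    then have "a0 \<in> pair_fiber i j (compress i j B) (fst \<kappa>0) (snd \<kappa>0)" using a0in by simp
    then have "Suc a0 \<in> pair_fiber i j (compress i j B) (fst \<kappa>0) (snd \<kappa>0)"
      using pair_fiber_compress[of "fst \<kappa>0" "snd \<kappa>0" B] k0 a0c by auto
    then show False using eq a1n by simp
  qed
  show ?thesis
    unfolding S1 S2
  proof (rule sum_strict_mono_ex1)
    show "\<exists>\<kappa>\<in>pair_key i j ` B. (\<Sum>a\<in>pair_fiber i j (compress i j B) (fst \<kappa>) (snd \<kappa>). G \<kappa> a)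
        < (\<Sum>a\<in>pair_fiber i j B (fst \<kappa>) (snd \<kappa>). G \<kappa> a)"
      using each(2)[OF k0 differs] k0 by blast
  qed (use fin each(1) in auto)
qed

end

lemma strongly_stable_shadow:
  assumes st: "strongly_stable p B" shows "strongly_stable p (shadow B)"
  unfolding strongly_stable_def
proof (intro conjI ballI allI impI)
  fix N x assume "N \<in> shadow B" "x \<in># N"
  then show "p \<le> x" using st unfolding shadow_def strongly_stable_def by (auto dest: in_diffD)
next
  fix N x y assume N: "N \<in> shadow B" and x: "x \<in># N" and y: "p \<le> y" "y < x"
  from N obtain M z where M: "M \<in> B" "z \<in># M" "N = M - {#z#}" unfolding shadow_def by blast
  have "x \<in># M" using x M(3) by (auto dest: in_diffD)
  then have "add_mset y (M - {#x#}) \<in> B" using st M(1) y unfolding strongly_stable_def by blast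
  moreover have z: "z \<in># M - {#x#}" using x M by (cases "z = x") (auto simp: in_diff_count)
  then have "add_mset y (N - {#x#}) = add_mset y (M - {#x#}) - {#z#}"
    using M(3) by (simp add: multiset_eq_iff)
  ultimately show "add_mset y (N - {#x#}) \<in> shadow B" using in_shadowI z by fastforce
qed

text \<open>Among the families of the same size with no larger shadow, one of minimal total weight is
  strongly stable, since otherwise a compression would lower its weight.\<close>

lemma exists_strongly_stable_replacement:
  assumes B: "B \<subseteq> multisets_of_size {0..<n} k"
  shows "\<exists>B'. B' \<subseteq> multisets_of_size {0..<n} k \<and> card B' = card B \<and>
           card (shadow B') \<le> card (shadow B) \<and> strongly_stable 0 B'"
proof -
  define P where "P B' \<longleftrightarrow> B' \<subseteq> multisets_of_size {0..<n} k \<and> card B' = card B \<and>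
           card (shadow B') \<le> card (shadow B)" for B'
  have "P B" using B by (simp add: P_def)
  then obtain B' where PB': "P B'" and least: "\<And>B''. P B'' \<Longrightarrow> (\<Sum>M\<in>B'. sum_mset M) \<le> (\<Sum>M\<in>B''. sum_mset M)"
    using ex_has_least_nat[of P B "\<lambda>B'. \<Sum>M\<in>B'. sum_mset M"] by blast
  have finU: "finite (multisets_of_size {0..<n} k)" by auto
  have fin: "finite B'" using PB' finite_subset[OF _ finU] by (auto simp: P_def)
  have "strongly_stable 0 B'"
    unfolding strongly_stable_def
  proof (intro conjI ballI allI impI)
    fix M x y assume M: "M \<in> B'" and x: "x \<in># M" and y: "0 \<le> y" "y < x"
    show "add_mset y (M - {#x#}) \<in> B'"
    proof (rule ccontr)
      assume nB: "add_mset y (M - {#x#}) \<notin> B'"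
      have yx: "y \<noteq> x" using y by simp
      have "M \<in> multisets_of_size {0..<n} k" using M PB' by (auto simp: P_def)
      then have xn: "x < n" using x by (auto simp: multisets_of_size_def)
      have "P (compress y x B')"
        unfolding P_def
      proof (intro conjI)
        show "compress y x B' \<subseteq> multisets_of_size {0..<n} k"
          using compress_subset[OF yx] PB' xn y by (simp add: P_def)
        show "card (compress y x B') = card B" using card_compress[OF yx fin] PB' by (simp add: P_def)
        show "card (shadow (compress y x B')) \<le> card (shadow B)"
          using card_shadow_compress[OF yx fin] PB' by (simp add: P_def)
      qed
      then have "(\<Sum>M\<in>B'. sum_mset M) \<le> (\<Sum>M\<in>compress y x B'. sum_mset M)" by (rule least)
      moreover have "(\<Sum>M\<in>compress y x B'. sum_mset M) < (\<Sum>M\<in>B'. sum_mset M)"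
        using weight_compress_less[OF yx fin y(2) M x nB] .
      ultimately show False by simp
    qed
  qed simp
  then show ?thesis using PB' by (auto simp: P_def)
qed

theorem macaulay_shadow_bound:
  fixes B :: "nat multiset set"
  assumes k: "1 \<le> k" and B: "B \<subseteq> multisets_of_size {0..<n} (Suc k)"
  shows "card B \<le> macaulay_fun k (card (shadow B))"
proof -
  obtain B' where B': "B' \<subseteq> multisets_of_size {0..<n} (Suc k)" "card B' = card B"
    "card (shadow B') \<le> card (shadow B)" "strongly_stable 0 B'"
    using exists_strongly_stable_replacement[OF B] by blast
  have fin: "finite B'" using B'(1) finite_subset by blast
  have finS: "finite (shadow B')" by (rule finite_shadow[OF fin])
  have szS: "\<forall>N\<in>shadow B'. size N = k"
    using B'(1) by (auto simp: shadow_def multisets_of_size_def size_Diff_singleton)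
  have "card B = card B'" using B'(2) by simp
  also have "\<dots> \<le> card (shadow_preimage k (shadow B'))"
    using subset_shadow_preimage_shadow[of B' k] B'(1)
    by (intro card_mono[OF finite_shadow_preimage[OF k finS]]) (auto simp: multisets_of_size_def)
  also have "\<dots> \<le> macaulay_fun k (card (shadow B'))"
    by (rule card_shadow_preimage_stable[OF k finS szS strongly_stable_shadow[OF B'(4)]])
  also have "\<dots> \<le> macaulay_fun k (card (shadow B))" by (rule macaulay_fun_mono[OF k B'(3)])
  finally show ?thesis .
qed

section \<open>Macaulay representations\<close>

lemma macaulay_rep_sum_less_aux:
  assumes r: "1 \<le> r" "r \<le> m r"
  shows "(\<forall>t. r \<le> t \<and> t < r + d \<longrightarrow> m t < m (Suc t)) \<Longrightarrow> m (r + d) \<le> M \<Longrightarrow>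
    (\<Sum>t=r..r + d. m t choose t) < Suc M choose (r + d)"
proof (induction d arbitrary: M)
  case 0
  have "m r choose r \<le> M choose r" by (rule binomial_right_mono) (use 0 in simp)
  moreover have "0 < M choose (r - 1)" using 0 r by simp
  moreover have "Suc M choose r = (M choose (r - 1)) + (M choose r)"
    using r by (metis Suc_diff_1 binomial_Suc_Suc less_le_trans zero_less_one)
  ultimately have "m r choose r < Suc M choose r" by linarith
  then show ?case by simp
next
  case (Suc d)
  have "m (r + d) < m (Suc (r + d))" "m (Suc (r + d)) \<le> M" using Suc.prems by simp_all
  then have "m (r + d) \<le> M - 1" "1 \<le> M" by auto
  then have "(\<Sum>t=r..r + d. m t choose t) < M choose (r + d)"
    using Suc.IH[of "M - 1"] Suc.prems by simp
  moreover have "m (Suc (r + d)) choose Suc (r + d) \<le> M choose Suc (r + d)"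
    by (rule binomial_right_mono) (use Suc.prems in simp)
  ultimately show ?case by (simp add: sum.cl_ivl_Suc)
qed

lemma macaulay_rep_sum_less:
  assumes "1 \<le> r" "r \<le> j" "r \<le> m r" "\<forall>t. r \<le> t \<and> t < j \<longrightarrow> m t < m (Suc t)" "m j \<le> M"
  shows "(\<Sum>t=r..j. m t choose t) < Suc M choose j"
  using macaulay_rep_sum_less_aux[of r m "j - r" M] assms by simp

lemma macaulay_rep_top_ge:
  assumes "macaulay_rep b j m r" shows "j \<le> m j"
proof -
  note rep = assms[unfolded macaulay_rep_def]
  have step: "m r + d \<le> m (r + d)" if "r + d \<le> j" for d
    using that by (induction d) (use rep in \<open>auto simp: Suc_le_eq intro: le_less_trans\<close>)
  moreover have "r \<le> j" "r \<le> m r" using rep by auto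
  ultimately show ?thesis using step[of "j - r"] by simp
qed

lemma macaulay_rep_upper_sum:
  "macaulay_rep b j m r \<Longrightarrow> (\<Sum>t=r..j. (m t + 1) choose (t + 1)) = macaulay_fun j b"
proof (induction j arbitrary: b)
  case (Suc j)
  note rep = Suc.prems[unfolded macaulay_rep_def]
  define M where "M = m (Suc j)"
  define rem where "rem = (if r \<le> j then (\<Sum>t=r..j. m t choose t) else 0)"
  have M: "Suc j \<le> M" using macaulay_rep_top_ge[OF Suc.prems] by (simp add: M_def)
  have b: "b = (M choose Suc j) + rem"
    using rep by (auto simp: M_def rem_def sum.cl_ivl_Suc)
  have "rem < M choose j"
  proof (cases "r \<le> j")
    case True
    have "(\<Sum>t=r..j. m t choose t) < Suc (M - 1) choose j"
      by (rule macaulay_rep_sum_less) (use rep True in \<open>auto simp: M_def\<close>)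
    then show ?thesis using True M by (simp add: rem_def)
  qed (use M in \<open>simp add: rem_def\<close>)
  then have "macaulay_fun (Suc j) b = (Suc M choose Suc (Suc j)) + macaulay_fun j rem"
    using macaulay_fun_Suc_eq[of M j b] b by simp
  moreover have "(if r \<le> j then (\<Sum>t=r..j. (m t + 1) choose (t + 1)) else 0) = macaulay_fun j rem"
  proof (cases "r \<le> j")
    case True
    then have "macaulay_rep rem j m r" using rep by (auto simp: macaulay_rep_def rem_def)
    then show ?thesis using Suc.IH True by simp
  qed (simp add: rem_def)
  moreover have "(\<Sum>t=r..Suc j. (m t + 1) choose (t + 1)) =
      (Suc M choose Suc (Suc j)) + (if r \<le> j then (\<Sum>t=r..j. (m t + 1) choose (t + 1)) else 0)"
    using rep by (auto simp: M_def sum.cl_ivl_Suc)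
  ultimately show ?case by simp
qed (simp add: macaulay_rep_def)

lemma macaulay_rep_exists:
  assumes "1 \<le> j" "1 \<le> b" shows "\<exists>m r. macaulay_rep b j m r"
  using assms
proof (induction j arbitrary: b rule: nat_induct_at_least)
  case base
  show ?case
    by (rule exI[of _ "\<lambda>_. b"], rule exI[of _ 1]) (use base in \<open>simp add: macaulay_rep_def\<close>)
next
  case (Suc j)
  obtain M where lo: "M choose Suc j \<le> b" and hi: "b < Suc M choose Suc j"
    and rem: "b - (M choose Suc j) < M choose j"
    using greedy_binomial_step[of "Suc j" b] by auto
  have M: "Suc j \<le> M" using Suc_le_binom_floor_if_pos[OF hi] Suc.prems by simp
  show ?case
  proof (cases "b = M choose Suc j")
    case True
    show ?thesis
      by (rule exI[of _ "\<lambda>_. M"], rule exI[of _ "Suc j"]) (use True M in \<open>auto simp: macaulay_rep_def\<close>)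
  next
    case False
    then have "1 \<le> b - (M choose Suc j)" using lo by simp
    then obtain m r where rep: "macaulay_rep (b - (M choose Suc j)) j m r"
      using Suc.IH by blast
    note R = rep[unfolded macaulay_rep_def]
    have "m j choose j \<le> b - (M choose Suc j)"
      using R member_le_sum[of j "{r..j}" "\<lambda>t. m t choose t"] by simp
    then have "m j < M"
      using rem by (meson binomial_right_mono leD le_trans not_le_imp_less)
    then have "macaulay_rep b (Suc j) (m(Suc j := M)) r"
      using R lo by (auto simp: macaulay_rep_def sum.cl_ivl_Suc less_Suc_eq_le intro!: sum.cong)
    then show ?thesis by blast
  qed
qed

lemma macaulay_upper_eq_macaulay_fun: "1 \<le> j \<Longrightarrow> macaulay_upper b j = macaulay_fun j b"
proof (cases "b = 0")
  case False
  assume j: "1 \<le> j"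
  from False have "1 \<le> b" by simp
  then obtain m r where rep: "macaulay_rep b j m r" using macaulay_rep_exists[OF j] by blast
  have "(THE v. \<exists>m r. macaulay_rep b j m r \<and> v = (\<Sum>t=r..j. (m t + 1) choose (t + 1))) =
      macaulay_fun j b"
  proof (rule the_equality)
    show "\<exists>m r. macaulay_rep b j m r \<and> macaulay_fun j b = (\<Sum>t=r..j. (m t + 1) choose (t + 1))"
      using rep macaulay_rep_upper_sum[OF rep] by metis
  qed (use macaulay_rep_upper_sum in blast)
  then show ?thesis using False by (simp add: macaulay_upper_def)
qed (simp add: macaulay_upper_def)

section \<open>Ferrers hypergraphs and order ideals of monomials\<close>

text \<open>A grid point \<open>x\<close> corresponds to the monomial \<open>\<Prod>t. X\<^sub>t ^ (x ! t - 1)\<close>, recorded as the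
  multiset of its variable indices.\<close>

definition monomial_of :: "nat list \<Rightarrow> nat multiset" where
  "monomial_of x = (\<Sum>t<length x. replicate_mset (x ! t - 1) t)"

definition point_of :: "nat \<Rightarrow> nat multiset \<Rightarrow> nat list" where
  "point_of d M = map (\<lambda>t. Suc (count M t)) [0..<d]"

lemma count_monomial_of: "count (monomial_of x) t = (if t < length x then x ! t - 1 else 0)"
  unfolding monomial_of_def by (simp add: count_sum sum.delta')

lemma set_monomial_of: "set_mset (monomial_of x) \<subseteq> {0..<length x}"
  by (auto simp: count_monomial_of simp flip: count_greater_zero_iff split: if_splits)

lemma size_monomial_of:
  assumes "\<forall>t<length x. 1 \<le> x ! t"
  shows "size (monomial_of x) + length x = sum_list x"
proof -
  have "(\<Sum>t<length x. x ! t) = (\<Sum>t<length x. (x ! t - 1) + 1)"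
    by (rule sum.cong) (use assms in auto)
  also have "\<dots> = size (monomial_of x) + length x"
    by (simp add: monomial_of_def sum_Suc)
  finally show ?thesis by (simp add: sum_list_sum_nth lessThan_atLeast0)
qed

lemma point_of_monomial_of: "length x = d \<Longrightarrow> \<forall>t<d. 1 \<le> x ! t \<Longrightarrow> point_of d (monomial_of x) = x"
  by (rule nth_equalityI) (auto simp: point_of_def count_monomial_of)

lemma monomial_of_point_of: "set_mset M \<subseteq> {0..<d} \<Longrightarrow> monomial_of (point_of d M) = M"
  by (rule multiset_eqI) (auto simp: count_monomial_of point_of_def not_in_iff[symmetric])

lemma monomial_of_mono:
  "length x = d \<Longrightarrow> length y = d \<Longrightarrow> \<forall>t<d. y ! t \<le> x ! t \<Longrightarrow> monomial_of y \<subseteq># monomial_of x"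
  unfolding subseteq_mset_def by (auto simp: count_monomial_of diff_le_mono)

lemma monomial_of_update:
  "z < length x \<Longrightarrow> 2 \<le> x ! z \<Longrightarrow> monomial_of (x[z := x ! z - 1]) = monomial_of x - {#z#}"
  by (rule multiset_eqI) (auto simp: count_monomial_of nth_list_update)

lemma monomial_of_replicate_1: "monomial_of (replicate d 1) = {#}"
  by (rule multiset_eqI) (simp add: count_monomial_of)

definition ferrers_slice :: "nat \<Rightarrow> nat list set \<Rightarrow> nat \<Rightarrow> nat multiset set" where
  "ferrers_slice d F k = monomial_of ` {x \<in> F. sum_list x = k + d}"

context
  fixes d :: nat and n :: "nat \<Rightarrow> nat" and F :: "nat list set"
  assumes fh: "ferrers_hypergraph d n F"
begin

lemma ferrers_point: "x \<in> F \<Longrightarrow> length x = d \<and> (\<forall>j<d. 1 \<le> x ! j \<and> x ! j \<le> n j)"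
  using fh unfolding ferrers_hypergraph_def by blast

lemma ferrers_down_closed:
  "x \<in> F \<Longrightarrow> length y = d \<Longrightarrow> \<forall>j<d. 1 \<le> y ! j \<and> y ! j \<le> x ! j \<Longrightarrow> y \<in> F"
  using fh unfolding ferrers_hypergraph_def by blast

lemma finite_ferrers: "finite F"
proof (rule finite_subset)
  show "F \<subseteq> {xs. set xs \<subseteq> {0..(\<Sum>j<d. n j)} \<and> length xs = d}"
  proof
    fix x assume x: "x \<in> F"
    have "x ! j \<le> (\<Sum>j<d. n j)" if "j < d" for j
      using ferrers_point[OF x] that member_le_sum[of j "{..<d}" n] by fastforce
    then show "x \<in> {xs. set xs \<subseteq> {0..(\<Sum>j<d. n j)} \<and> length xs = d}"
      using ferrers_point[OF x] by (auto simp: in_set_conv_nth)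
  qed
qed (simp add: finite_lists_length_eq)

lemma card_ferrers_slice: "card (ferrers_slice d F k) = alpha d k F"
  unfolding ferrers_slice_def alpha_def
  by (rule card_image, rule inj_on_inverseI[of _ "point_of d"]) (auto dest: ferrers_point intro: point_of_monomial_of)

lemma ferrers_slice_subset: "ferrers_slice d F k \<subseteq> multisets_of_size {0..<d} k"
proof
  fix M assume "M \<in> ferrers_slice d F k"
  then obtain x where x: "x \<in> F" "sum_list x = k + d" "M = monomial_of x"
    by (auto simp: ferrers_slice_def)
  then show "M \<in> multisets_of_size {0..<d} k"
    using size_monomial_of[of x] set_monomial_of[of x] ferrers_point[OF x(1)]
    by (simp add: multisets_of_size_def)
qed

lemma shadow_ferrers_slice: "shadow (ferrers_slice d F (Suc k)) \<subseteq> ferrers_slice d F k"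
proof
  fix N assume "N \<in> shadow (ferrers_slice d F (Suc k))"
  then obtain x z where x: "x \<in> F" "sum_list x = Suc k + d" and z: "z \<in># monomial_of x"
    and N: "N = monomial_of x - {#z#}"
    unfolding shadow_def ferrers_slice_def by blast
  have lx: "length x = d" and ex: "\<forall>j<d. 1 \<le> x ! j \<and> x ! j \<le> n j" using ferrers_point[OF x(1)] by auto
  have zd: "z < d" using set_monomial_of[of x] z lx by auto
  then have xz: "2 \<le> x ! z" using z lx by (simp add: count_monomial_of flip: count_greater_zero_iff)
  define y where "y = x[z := x ! z - 1]"
  have "y \<in> F"
    by (rule ferrers_down_closed[OF x(1)]) (use ex xz lx zd in \<open>auto simp: y_def nth_list_update\<close>)
  moreover have "monomial_of y = N" using monomial_of_update[of z x] zd lx xz N by (simp add: y_def)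
  moreover have "sum_list y = k + d"
    using sum_list_update[of z x "x ! z - 1"] member_le_sum_list[of "x ! z" x] zd lx xz x(2)
    by (simp add: y_def)
  ultimately show "N \<in> ferrers_slice d F k" by (auto simp: ferrers_slice_def)
qed

lemma ferrers_slice_0: "F \<noteq> {} \<Longrightarrow> ferrers_slice d F 0 = {{#}}"
proof -
  assume "F \<noteq> {}"
  then obtain x where "x \<in> F" by blast
  then have "replicate d 1 \<in> F"
    by (rule ferrers_down_closed) (use ferrers_point[OF \<open>x \<in> F\<close>] in auto)
  then have "{#} \<in> ferrers_slice d F 0"
    using monomial_of_replicate_1[of d] by (force simp: ferrers_slice_def sum_list_replicate)
  then show ?thesis using ferrers_slice_subset[of 0] by auto
qed

theorem ferrers_alpha_O_sequence:
  assumes "F \<noteq> {}" shows "O_sequence (\<lambda>i. alpha d i F) \<and> alpha d 1 F \<le> d"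
proof -
  have "alpha d 0 F = 1" using ferrers_slice_0[OF assms] card_ferrers_slice[of 0] by simp
  moreover have "alpha d 1 F \<le> d"
    using card_mono[OF finite_multisets_of_size[OF finite_atLeastLessThan] ferrers_slice_subset[of 1]]
      card_ferrers_slice[of 1]
    by (simp add: card_multisets_of_size)
  moreover have "alpha d (Suc i) F \<le> macaulay_upper (alpha d i F) i" if i: "1 \<le> i" for i
  proof -
    have "alpha d (Suc i) F \<le> macaulay_fun i (card (shadow (ferrers_slice d F (Suc i))))"
      using macaulay_shadow_bound[OF i ferrers_slice_subset] card_ferrers_slice by simp
    also have "\<dots> \<le> macaulay_fun i (alpha d i F)"
      using macaulay_fun_mono[OF i] card_mono[OF _ shadow_ferrers_slice[of i]]
        card_ferrers_slice finite_ferrers by (simp add: ferrers_slice_def)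
    finally show ?thesis using macaulay_upper_eq_macaulay_fun[OF i] by simp
  qed
  ultimately show ?thesis by (simp add: O_sequence_def)
qed

end

lemma subseteq_diff_single_if_in_diff:
  assumes "N \<subseteq># M" "z \<in># M - N" shows "N \<subseteq># M - {#z#}"
  unfolding subseteq_mset_def
proof
  fix a
  show "count N a \<le> count (M - {#z#}) a"
    using assms by (cases "a = z") (auto simp: subseteq_mset_def in_diff_count)
qed

lemma down_closed_if_shadow_preimage_chain:
  assumes chain: "\<And>k. G (Suc k) \<subseteq> shadow_preimage k (G k)" and sz: "\<And>k M. M \<in> G k \<Longrightarrow> size M = k"
  shows "M \<in> G k \<Longrightarrow> N \<subseteq># M \<Longrightarrow> N \<in> G (size N)"
proof (induction k arbitrary: M)
  case 0
  then show ?case using sz by fastforce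
next
  case (Suc k)
  show ?case
  proof (cases "N = M")
    case True
    then show ?thesis using Suc.prems sz by simp
  next
    case False
    then have "M - N \<noteq> {#}"
      using Suc.prems(2) by (metis Diff_eq_empty_iff_mset subset_mset.antisym)
    then obtain z where z: "z \<in># M - N" by (meson multiset_nonemptyE)
    then have "M - {#z#} \<in> G k"
      using chain Suc.prems(1) by (auto simp: shadow_preimage_def dest: in_diffD)
    then show ?thesis using Suc.IH subseteq_diff_single_if_in_diff[OF Suc.prems(2) z] by blast
  qed
qed

definition ferrers_of :: "nat \<Rightarrow> nat \<Rightarrow> (nat \<Rightarrow> nat multiset set) \<Rightarrow> nat list set" where
  "ferrers_of d s G = {x. length x = d \<and> (\<forall>j<d. 1 \<le> x ! j \<and> x ! j \<le> Suc s) \<and>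
     monomial_of x \<in> G (size (monomial_of x))}"

lemma ferrers_hypergraph_ferrers_of:
  assumes down: "\<And>k M N. M \<in> G k \<Longrightarrow> N \<subseteq># M \<Longrightarrow> N \<in> G (size N)"
  shows "ferrers_hypergraph d (\<lambda>_. Suc s) (ferrers_of d s G)"
  unfolding ferrers_hypergraph_def
proof (intro conjI ballI allI impI)
  fix x y assume x: "x \<in> ferrers_of d s G" and y: "length y = d \<and> (\<forall>j<d. 1 \<le> y ! j \<and> y ! j \<le> x ! j)"
  have "monomial_of y \<subseteq># monomial_of x"
    using x y by (intro monomial_of_mono[of x d y]) (auto simp: ferrers_of_def)
  then have "monomial_of y \<in> G (size (monomial_of y))" using down x by (auto simp: ferrers_of_def)
  moreover have "\<forall>j<d. 1 \<le> y ! j \<and> y ! j \<le> Suc s" using x y by (force simp: ferrers_of_def)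
  ultimately show "y \<in> ferrers_of d s G" using y by (simp add: ferrers_of_def)
qed (auto simp: ferrers_of_def)

lemma alpha_ferrers_of:
  assumes sz: "\<And>k M. M \<in> G k \<Longrightarrow> size M = k"
    and vars: "\<And>k M. M \<in> G k \<Longrightarrow> set_mset M \<subseteq> {0..<d}"
    and bounded: "\<And>k M. M \<in> G k \<Longrightarrow> k \<le> s"
  shows "alpha d i (ferrers_of d s G) = card (G i)"
proof -
  let ?X = "{x \<in> ferrers_of d s G. sum_list x = i + d}"
  have "inj_on monomial_of ?X"
    by (rule inj_on_inverseI[of _ "point_of d"]) (auto simp: ferrers_of_def point_of_monomial_of)
  moreover have "monomial_of ` ?X = G i"
  proof (intro equalityI subsetI)
    fix M assume "M \<in> monomial_of ` ?X"
    then obtain x where x: "x \<in> ferrers_of d s G" "sum_list x = i + d" "M = monomial_of x" by auto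
    then have "size M = i" using size_monomial_of[of x] by (auto simp: ferrers_of_def)
    then show "M \<in> G i" using x by (simp add: ferrers_of_def)
  next
    fix M assume M: "M \<in> G i"
    define x where "x = point_of d M"
    have x: "length x = d" "monomial_of x = M"
      using monomial_of_point_of[OF vars[OF M]] by (simp_all add: x_def point_of_def)
    have "\<forall>j<d. 1 \<le> x ! j \<and> x ! j \<le> Suc s"
      using count_le_size[of M] sz[OF M] bounded[OF M] order_trans by (auto simp: x_def point_of_def)
    moreover from this have "sum_list x = i + d"
      using size_monomial_of[of x] x sz[OF M] by simp
    ultimately show "M \<in> monomial_of ` ?X"
      using x M sz[OF M] by (auto simp: ferrers_of_def intro!: image_eqI[of M _ x])
  qed
  ultimately show ?thesis unfolding alpha_def by (metis card_image)
qed

theorem O_sequence_imp_ferrers: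
  assumes os: "O_sequence H" and h1: "H 1 \<le> d" and hs: "\<forall>i>s. H i = 0"
  shows "\<exists>n F. ferrers_hypergraph d n F \<and> F \<noteq> {} \<and> (\<forall>i. alpha d i F = H i)"
proof -
  define G where "G k = colex_seg 0 k (H k)" for k
  have G0: "G 0 = {{#}}" using os by (simp add: G_def O_sequence_def)
  have sz: "\<And>k M. M \<in> G k \<Longrightarrow> size M = k" unfolding G_def by (rule size_colex_seg)
  have card_G: "card (G k) = H k" for k
    using G0 os card_colex_seg[of k "H k" 0] by (cases k) (auto simp: G_def O_sequence_def)
  have chain: "G (Suc k) \<subseteq> shadow_preimage k (G k)" for k
  proof (cases k)
    case 0
    show ?thesis
    proof
      fix M assume "M \<in> G (Suc k)"
      then have "size M = 1" using sz 0 by simp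
      then obtain a where "M = {#a#}" by (metis One_nat_def size_1_singleton_mset)
      then show "M \<in> shadow_preimage k (G k)" using 0 G0 by (simp add: shadow_preimage_def)
    qed
  next
    case (Suc k')
    then have k: "1 \<le> k" by simp
    have "H (Suc k) \<le> macaulay_upper (H k) k" using os k unfolding O_sequence_def by blast
    then have "H (Suc k) \<le> macaulay_fun k (H k)" using macaulay_upper_eq_macaulay_fun[OF k] by simp
    then have "G (Suc k) \<subseteq> colex_seg 0 (Suc k) (macaulay_fun k (H k))"
      unfolding G_def by (rule colex_seg_mono)
    then show ?thesis using shadow_preimage_colex_seg[of k "H k" 0] k by (simp add: G_def)
  qed
  have down: "N \<in> G (size N)" if "M \<in> G k" "N \<subseteq># M" for k M N
    by (rule down_closed_if_shadow_preimage_chain[of G, OF chain sz that])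
  have vars: "set_mset M \<subseteq> {0..<d}" if "M \<in> G k" for k M
  proof
    fix z assume "z \<in> set_mset M"
    then have "{#z#} \<in> G 1" using down[OF that, of "{#z#}"] by simp
    moreover have "G 1 \<subseteq> multisets_of_size {0..<H 1} 1"
      using colex_seg_subset[of "H 1" "H 1" 1 0] by (simp add: G_def)
    ultimately show "z \<in> {0..<d}" using h1 by (auto simp: multisets_of_size_def)
  qed
  have bounded: "k \<le> s" if "M \<in> G k" for k M
    using that hs by (metis G_def colex_seg_0 empty_iff not_le)
  show ?thesis
  proof (intro exI conjI)
    show "ferrers_hypergraph d (\<lambda>_. Suc s) (ferrers_of d s G)"
      by (rule ferrers_hypergraph_ferrers_of[OF down])
    have "replicate d 1 \<in> ferrers_of d s G"
      using G0 monomial_of_replicate_1[of d] by (simp add: ferrers_of_def)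
    then show "ferrers_of d s G \<noteq> {}" by blast
    show "\<forall>i. alpha d i (ferrers_of d s G) = H i"
      using alpha_ferrers_of[OF sz vars bounded] card_G by simp
  qed
qed

theorem proposition3p4:
  fixes d s :: nat and h :: "nat \<Rightarrow> nat"
  assumes "d \<ge> 1"
  shows "(\<exists>n F. ferrers_hypergraph d n F \<and> F \<noteq> {} \<and>
            (\<forall>i\<le>s. alpha d i F = h i) \<and> (\<forall>i>s. alpha d i F = 0))
         \<longleftrightarrow> (O_sequence (trunc_seq h s) \<and> trunc_seq h s 1 \<le> d)"
proof
  assume "\<exists>n F. ferrers_hypergraph d n F \<and> F \<noteq> {} \<and>
            (\<forall>i\<le>s. alpha d i F = h i) \<and> (\<forall>i>s. alpha d i F = 0)"
  then obtain n F where F: "ferrers_hypergraph d n F" "F \<noteq> {}"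
    and "\<forall>i\<le>s. alpha d i F = h i" "\<forall>i>s. alpha d i F = 0" by blast
  then have "trunc_seq h s = (\<lambda>i. alpha d i F)" by (auto simp: trunc_seq_def)
  then show "O_sequence (trunc_seq h s) \<and> trunc_seq h s 1 \<le> d"
    using ferrers_alpha_O_sequence[OF F] by simp
next
  assume "O_sequence (trunc_seq h s) \<and> trunc_seq h s 1 \<le> d"
  then obtain n F where "ferrers_hypergraph d n F" "F \<noteq> {}" "\<forall>i. alpha d i F = trunc_seq h s i"
    using O_sequence_imp_ferrers[of "trunc_seq h s" d s] by (auto simp: trunc_seq_def)
  then show "\<exists>n F. ferrers_hypergraph d n F \<and> F \<noteq> {} \<and>
            (\<forall>i\<le>s. alpha d i F = h i) \<and> (\<forall>i>s. alpha d i F = 0)"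
    by (intro exI[of _ n] exI[of _ F]) (auto simp: trunc_seq_def)
qed

end
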